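(* Let $(P,e)$ be a tree pattern with $P\in\mathcal{T}_k$, and let $\sigma(P,e)=(\tau(P),C)$ be the mesh pattern defined below. Then for every $n\ge 0$, the preorder map $\tau$ restricts to a bijection $\tau\colon \mathcal{T}_n(P,e)\to S_n(231,\sigma(P,e))$, where $S_n(231,\sigma(P,e))$ is the set of permutations of $[n]$ that avoid both the classical pattern $231$ and the mesh pattern $\sigma(P,e)$.
   Context: For $n\ge 0$, $\mathcal{T}_n$ is the set of binary trees with $n$ vertices (every vertex has at most one left and at most one right child), with vertices labeled $1,\dots,n$ by the search tree property (vertices in the left subtree of $i$ are smaller than $i$, those in its right subtree larger); $\mathcal{T}_0=\{\varepsilon\}$. For a vertex $i$: $c_L(i),c_R(i),p(i)$ denote its left child, right child, parent ($\varepsilon$ if nonexistent); $r(T)$ is the root; $T(i)$ is the subtree rooted at $i$; $L(i),R(i)$ are the subtrees rooted at $c_L(i),c_R(i)$ (empty if that child does not exist); $L(T)=L(r(T))$, $R(T)=R(r(T))$. $B_R(i)=\{i,c_R(i),c_R^2(i),\dots\}$ is the set of vertices of the right branch starting at $i$ (following right children as long as they exist), and $B_R^-(i)$ is $B_R(i)$ with its last (lowest) vertex removed. A tree pattern is a pair $(P,e)$ with $P\in\mathcal{T}_k$ and $e\colon[k]\setminus\{r(P)\}\to\{0,1\}$. A tree $T\in\mathcal{T}_n$ contains $(P,e)$ if there is an injection $f\colon[k]\to[n]$ such that for every non-root vertex $i$ of $P$: if $e(i)=1$, then $f(i)$ is the left (resp. right) child of $f(p(i))$ in $T$ when $i$ is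 the left (resp. right) child of $p(i)$ in $P$; if $e(i)=0$, then $f(i)\in L(f(p(i)))$ (resp. $f(i)\in R(f(p(i)))$) when $i$ is the left (resp. right) child of $p(i)$. Otherwise $T$ avoids $(P,e)$; $\mathcal{T}_n(P,e)$ is the set of $T\in\mathcal{T}_n$ avoiding $(P,e)$. The preorder permutation is defined by $\tau(\varepsilon)=$ empty and $\tau(T)=(r(T),\tau(L(T)),\tau(R(T)))$. Mesh patterns: for $\pi\in S_n$ let $G(\pi)=\{(i,\pi(i)):i\in[n]\}$. A mesh pattern is $(\tau,C)$ with $\tau\in S_k$, $C\subseteq\{0,\dots,k\}^2$. A permutation $\pi\in S_n$ contains $(\tau,C)$ if there are indices $\nu_1<\dots<\nu_k$ such that $\pi(\nu_1),\dots,\pi(\nu_k)$ are in the same relative order as $\tau$, and, letting $\lambda_1<\dots<\lambda_k$ be these values sorted, with $\nu_0=\lambda_0=0$, $\nu_{k+1}=\lambda_{k+1}=n+1$, we have $G(\pi)\cap\big((\nu_i,\nu_{i+1})\times(\lambda_j,\lambda_{j+1})\big)=\emptyset$ for all $(i,j)\in C$. Classical pattern containment is the case $C=\emptyset$. Definition of $\sigma(P,e)$: let $\rho=\tau(P)^{-1}$. For $i\in[k]$ let $C_i=\{(\rho(i)-1,j): j\in B_R^-(i)\}$; for $i\in[k]\setminus\{r(P)\}$ let $C_i'=\emptyset$ if $e(i)=0$ and $C_i'=\{(\rho(i)-1,\min P(i)-1),(\rho(i)-1,\max P(i))\}$ if $e(i)=1$, where $\min P(i),\max P(i)$ are the smallest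 and largest vertex labels in the subtree $P(i)$. Then $\sigma(P,e)=\big(\tau(P),\bigcup_{i\in[k]}C_i\cup\bigcup_{i\in[k]\setminus\{r(P)\}}C_i'\big)$. *)

theory Defs
  imports "HOL-Library.Tree"
begin

text \<open>T_n: binary trees whose vertex labels are exactly 1..n and satisfy the
(strict) search tree property. The empty tree Leaf plays the role of epsilon.\<close>
definition trees :: "nat \<Rightarrow> nat tree set" where
  "trees n = {t. bst t \<and> set_tree t = {1..n}}"

fun lsub :: "'a tree \<Rightarrow> 'a tree" where
  "lsub Leaf = Leaf" | "lsub (Node l a r) = l"

fun rsub :: "'a tree \<Rightarrow> 'a tree" where
  "rsub Leaf = Leaf" | "rsub (Node l a r) = r"

fun subtree :: "'a tree \<Rightarrow> 'a \<Rightarrow> 'a tree" where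
  "subtree Leaf i = Leaf"
| "subtree (Node l a r) i =
     (if i = a then Node l a r
      else if i \<in> set_tree l then subtree l i else subtree r i)"

definition Lset :: "'a tree \<Rightarrow> 'a \<Rightarrow> 'a set" where
  "Lset t i = set_tree (lsub (subtree t i))"
definition Rset :: "'a tree \<Rightarrow> 'a \<Rightarrow> 'a set" where
  "Rset t i = set_tree (rsub (subtree t i))"

definition is_lchild :: "'a tree \<Rightarrow> 'a \<Rightarrow> 'a \<Rightarrow> bool" where
  "is_lchild t c p \<longleftrightarrow> p \<in> set_tree t \<and> lsub (subtree t p) \<noteq> Leaf \<and> value (lsub (subtree t p)) = c"
definition is_rchild :: "'a tree \<Rightarrow> 'a \<Rightarrow> 'a \<Rightarrow> bool" where
  "is_rchild t c p \<longleftrightarrow> p \<in> set_tree t \<and> rsub (subtree t p) \<noteq> Leaf \<and> value (rsub (subtree t p)) = c"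

text \<open>parent p(i) (only meaningful for non-root vertices)\<close>
definition parent :: "'a tree \<Rightarrow> 'a \<Rightarrow> 'a" where
  "parent t i = (THE p. is_lchild t i p \<or> is_rchild t i p)"

text \<open>Tree pattern (P,e): e is given as a function nat => bool (True = 1, False = 0);
only its values on the non-root vertices of P matter.\<close>
definition tree_contains :: "nat tree \<Rightarrow> nat tree \<Rightarrow> (nat \<Rightarrow> bool) \<Rightarrow> bool" where
  "tree_contains T P e \<longleftrightarrow>
     (\<exists>f. inj_on f (set_tree P) \<and> f ` set_tree P \<subseteq> set_tree T \<and>
        (\<forall>i \<in> set_tree P. i \<noteq> value P \<longrightarrow>
           (is_lchild P i (parent P i) \<longrightarrow>
              (if e i then is_lchild T (f i) (f (parent P i))
               else f i \<in> Lset T (f (parent P i)))) \<and>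
           (is_rchild P i (parent P i) \<longrightarrow>
              (if e i then is_rchild T (f i) (f (parent P i))
               else f i \<in> Rset T (f (parent P i))))))"

definition trees_avoiding :: "nat \<Rightarrow> nat tree \<Rightarrow> (nat \<Rightarrow> bool) \<Rightarrow> nat tree set" where
  "trees_avoiding n P e = {T \<in> trees n. \<not> tree_contains T P e}"

text \<open>A permutation pi of [n] is represented by its one-line notation, a list
xs with pi(i) = xs ! (i - 1) for i in 1..n.\<close>
definition perms :: "nat \<Rightarrow> nat list set" where
  "perms n = {xs. length xs = n \<and> distinct xs \<and> set xs = {1..n}}"

definition pval :: "nat list \<Rightarrow> nat \<Rightarrow> nat" where
  "pval xs i = xs ! (i - 1)"

text \<open>Containment of the mesh pattern (tau, C) in pi (k = length tau, n = length pi).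
nu' and lam' are the extended index / value sequences with nu_0 = lam_0 = 0 and
nu_(k+1) = lam_(k+1) = n+1; lam_1 < ... < lam_k are the occurrence values sorted.\<close>
definition mesh_contains :: "nat list \<Rightarrow> nat list \<Rightarrow> (nat \<times> nat) set \<Rightarrow> bool" where
  "mesh_contains pi tau C \<longleftrightarrow>
     (let n = length pi; k = length tau in
      \<exists>\<nu> :: nat \<Rightarrow> nat.
        strict_mono_on {1..k} \<nu> \<and> \<nu> ` {1..k} \<subseteq> {1..n} \<and>
        (\<forall>a \<in> {1..k}. \<forall>b \<in> {1..k}.
            pval pi (\<nu> a) < pval pi (\<nu> b) \<longleftrightarrow> pval tau a < pval tau b) \<and>
        (let nu' = (\<lambda>i. if i = 0 then 0 else if i = k + 1 then n + 1 else \<nu> i);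
             lam' = (\<lambda>j. if j = 0 then 0 else if j = k + 1 then n + 1
                         else sorted_list_of_set ((\<lambda>a. pval pi (\<nu> a)) ` {1..k}) ! (j - 1))
         in \<forall>(i, j) \<in> C. \<not> (\<exists>x \<in> {1..n}. nu' i < x \<and> x < nu' (i + 1) \<and>
                                       lam' j < pval pi x \<and> pval pi x < lam' (j + 1))))"

definition classical_contains :: "nat list \<Rightarrow> nat list \<Rightarrow> bool" where
  "classical_contains pi tau \<longleftrightarrow> mesh_contains pi tau {}"

fun rspine :: "'a tree \<Rightarrow> 'a list" where
  "rspine Leaf = []" | "rspine (Node l a r) = a # rspine r"

definition BR :: "'a tree \<Rightarrow> 'a \<Rightarrow> 'a set" where
  "BR t i = set (rspine (subtree t i))"
definition BR_minus :: "'a tree \<Rightarrow> 'a \<Rightarrow> 'a set" where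
  "BR_minus t i = set (butlast (rspine (subtree t i)))"

text \<open>rho = tau(P)^{-1}: rho(i) is the (1-based) position of i in the preorder word\<close>
definition rho :: "nat tree \<Rightarrow> nat \<Rightarrow> nat" where
  "rho P i = (THE m. m \<in> {1..length (preorder P)} \<and> pval (preorder P) m = i)"

definition sigma_C :: "nat tree \<Rightarrow> (nat \<Rightarrow> bool) \<Rightarrow> (nat \<times> nat) set" where
  "sigma_C P e =
     (\<Union>i \<in> set_tree P. {(rho P i - 1, j) | j. j \<in> BR_minus P i}) \<union>
     (\<Union>i \<in> set_tree P - {value P}.
        if e i then {(rho P i - 1, Min (set_tree (subtree P i)) - 1),
                     (rho P i - 1, Max (set_tree (subtree P i)))}
        else {})"

definition perms_avoiding :: "nat \<Rightarrow> nat tree \<Rightarrow> (nat \<Rightarrow> bool) \<Rightarrow> nat list set" where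
  "perms_avoiding n P e =
     {xs \<in> perms n. \<not> classical_contains xs [2, 3, 1] \<and>
                    \<not> mesh_contains xs (preorder P) (sigma_C P e)}"

end

(*
  Preorder is the classical bijection from binary search trees on [n] onto the 231-avoiding
  permutations: a vertex is followed by its left and then its right subtree, and a 231-avoiding
  word splits after its first letter into the smaller letters followed by the larger ones.

  It remains to show that T contains (P,e) iff tau(T) contains sigma(P,e). Both are equivalent
  to the existence of an "occurrence": a map from P to T preserving the order of the labels
  and the preorder of the vertices whose image leaves the shaded boxes of sigma(P,e) empty.
  A tree embedding maps descendants to descendants, which keeps these boxes empty. Conversely,
  the boxes attached to the right branch B_R^-(m) force right children into right subtrees, and
  the two boxes at min P(i) - 1 and max P(i) force the edges with e(i) = 1 to be edges of T.
*)
theory Submission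
  imports Defs
begin

fun list_index :: "'a list \<Rightarrow> 'a \<Rightarrow> nat" where
  "list_index [] x = 0"
| "list_index (y # ys) x = (if y = x then 0 else Suc (list_index ys x))"

lemma list_index_le_length: "list_index xs x \<le> length xs"
  by (induction xs) auto

lemma list_index_less_length_iff: "list_index xs x < length xs \<longleftrightarrow> x \<in> set xs"
  by (induction xs) auto

lemma nth_list_index: "x \<in> set xs \<Longrightarrow> xs ! list_index xs x = x"
  by (induction xs) auto

lemma list_index_nth: "distinct xs \<Longrightarrow> i < length xs \<Longrightarrow> list_index xs (xs ! i) = i"
proof (induction xs arbitrary: i)
  case (Cons a xs)
  then show ?case by (cases i) (auto simp: nth_mem)
qed simp

lemma list_index_append:
  "list_index (xs @ ys) x = (if x \<in> set xs then list_index xs x else length xs + list_index ys x)"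
  by (induction xs) auto

lemma list_index_inj: "x \<in> set xs \<Longrightarrow> list_index xs x = list_index xs y \<Longrightarrow> x = y"
  by (metis list_index_less_length_iff nth_list_index)

definition Dset :: "'a tree \<Rightarrow> 'a \<Rightarrow> 'a set" where
  "Dset t x = set_tree (subtree t x)"

lemma subtree_eq_Leaf: "x \<notin> set_tree t \<Longrightarrow> subtree t x = Leaf"
  by (induction t) auto

lemma subtree_eq_Node: "x \<in> set_tree t \<Longrightarrow> \<exists>l r. subtree t x = Node l x r"
  by (induction t) auto

lemma set_subtree_subset: "set_tree (subtree t x) \<subseteq> set_tree t"
  by (induction t) auto

lemma bst_subtree: "bst t \<Longrightarrow> bst (subtree t x)"
  by (induction t) auto

lemma subtree_subtree: "bst t \<Longrightarrow> y \<in> Dset t x \<Longrightarrow> subtree (subtree t x) y = subtree t y"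
  unfolding Dset_def
proof (induction t)
  case (Node l a r)
  consider "x = a" | "x \<noteq> a" "x \<in> set_tree l" | "x \<noteq> a" "x \<notin> set_tree l" by blast
  then show ?case
  proof cases
    case 2
    then have "y \<in> set_tree l" using Node.prems set_subtree_subset by fastforce
    then show ?thesis using Node 2 by auto
  next
    case 3
    then have "y \<in> set_tree r" "x \<in> set_tree r"
      using Node.prems set_subtree_subset subtree_eq_Leaf by fastforce+
    moreover have "y \<notin> set_tree l" using calculation Node.prems(1) by force
    ultimately show ?thesis using Node 3 by auto
  qed simp
qed simp

lemma Dset_Node: "Dset (Node l a r) x =
    (if x = a then set_tree (Node l a r) else if x \<in> set_tree l then Dset l x else Dset r x)"
  by (simp add: Dset_def)
lemma Lset_Node: "Lset (Node l a r) x =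
    (if x = a then set_tree l else if x \<in> set_tree l then Lset l x else Lset r x)"
  by (simp add: Lset_def)
lemma Rset_Node: "Rset (Node l a r) x =
    (if x = a then set_tree r else if x \<in> set_tree l then Rset l x else Rset r x)"
  by (simp add: Rset_def)

lemma Dset_eq_empty: "x \<notin> set_tree t \<Longrightarrow> Dset t x = {}"
  by (simp add: Dset_def subtree_eq_Leaf)
lemma Lset_eq_empty: "x \<notin> set_tree t \<Longrightarrow> Lset t x = {}"
  by (simp add: Lset_def subtree_eq_Leaf)
lemma Rset_eq_empty: "x \<notin> set_tree t \<Longrightarrow> Rset t x = {}"
  by (simp add: Rset_def subtree_eq_Leaf)

lemma Dset_eq:
  assumes "x \<in> set_tree t"
  shows "Dset t x = insert x (Lset t x \<union> Rset t x)"
  using subtree_eq_Node[OF assms] by (auto simp: Dset_def Lset_def Rset_def)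

lemma Lset_subset_Dset: "Lset t x \<subseteq> Dset t x"
  by (cases "x \<in> set_tree t") (auto simp: Dset_eq Lset_eq_empty)
lemma Rset_subset_Dset: "Rset t x \<subseteq> Dset t x"
  by (cases "x \<in> set_tree t") (auto simp: Dset_eq Rset_eq_empty)
lemma self_in_Dset: "x \<in> set_tree t \<Longrightarrow> x \<in> Dset t x"
  by (simp add: Dset_eq)

lemma Dset_memD: "y \<in> Dset t x \<Longrightarrow> x \<in> set_tree t \<and> y \<in> set_tree t"
  using Dset_eq_empty set_subtree_subset by (fastforce simp: Dset_def)
lemma Lset_memD: "y \<in> Lset t x \<Longrightarrow> x \<in> set_tree t \<and> y \<in> set_tree t"
  using Dset_memD Lset_subset_Dset by fast
lemma Rset_memD: "y \<in> Rset t x \<Longrightarrow> x \<in> set_tree t \<and> y \<in> set_tree t"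
  using Dset_memD Rset_subset_Dset by fast

lemma Lset_less: "bst t \<Longrightarrow> y \<in> Lset t x \<Longrightarrow> y < x"
  using bst_subtree[of t x] subtree_eq_Node[of x t] Lset_memD[of y t x] by (auto simp: Lset_def)
lemma Rset_greater: "bst t \<Longrightarrow> y \<in> Rset t x \<Longrightarrow> x < y"
  using bst_subtree[of t x] subtree_eq_Node[of x t] Rset_memD[of y t x] by (auto simp: Rset_def)

lemma Lset_Rset_disjoint: "bst t \<Longrightarrow> y \<in> Lset t x \<Longrightarrow> y \<notin> Rset t x"
  using Lset_less Rset_greater by fastforce

lemma Dset_cases: "y \<in> Dset t x \<Longrightarrow> y = x \<or> y \<in> Lset t x \<or> y \<in> Rset t x"
  using Dset_eq Dset_memD by fastforce

lemma Lset_iff: "bst t \<Longrightarrow> y \<in> Lset t x \<longleftrightarrow> y \<in> Dset t x \<and> y < x"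
  using Dset_cases Lset_subset_Dset Lset_less Rset_greater by fastforce
lemma Rset_iff: "bst t \<Longrightarrow> y \<in> Rset t x \<longleftrightarrow> y \<in> Dset t x \<and> x < y"
  using Dset_cases Rset_subset_Dset Lset_less Rset_greater by fastforce

lemma Dset_subtree: "bst t \<Longrightarrow> y \<in> Dset t x \<Longrightarrow> Dset (subtree t x) y = Dset t y"
  by (simp add: Dset_def subtree_subtree)
lemma Lset_subtree: "bst t \<Longrightarrow> y \<in> Dset t x \<Longrightarrow> Lset (subtree t x) y = Lset t y"
  by (simp add: Lset_def subtree_subtree)
lemma Rset_subtree: "bst t \<Longrightarrow> y \<in> Dset t x \<Longrightarrow> Rset (subtree t x) y = Rset t y"
  by (simp add: Rset_def subtree_subtree)

lemma Dset_trans: "bst t \<Longrightarrow> y \<in> Dset t x \<Longrightarrow> z \<in> Dset t y \<Longrightarrow> z \<in> Dset t x"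
  using Dset_subtree[of t y x] set_subtree_subset[of "subtree t x" y] by (auto simp: Dset_def)

lemma Lset_trans:
  assumes t: "bst t" and y: "y \<in> Lset t x" and z: "z \<in> Dset t y"
  shows "z \<in> Lset t x"
proof -
  obtain l r where x: "subtree t x = Node l x r"
    using subtree_eq_Node[of x t] Lset_memD[OF y] by blast
  have "y \<in> set_tree l" "bst (Node l x r)" using y x bst_subtree[OF t, of x] by (auto simp: Lset_def)
  moreover have "z \<in> Dset (Node l x r) y"
    using Dset_subtree[OF t, of y x] z y Lset_subset_Dset[of t x] x by auto
  ultimately show ?thesis
    using x set_subtree_subset[of l y] by (fastforce simp: Lset_def Dset_def split: if_splits)
qed

lemma Rset_trans:
  assumes t: "bst t" and y: "y \<in> Rset t x" and z: "z \<in> Dset t y"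
  shows "z \<in> Rset t x"
proof -
  obtain l r where x: "subtree t x = Node l x r"
    using subtree_eq_Node[of x t] Rset_memD[OF y] by blast
  have "y \<in> set_tree r" "bst (Node l x r)" using y x bst_subtree[OF t, of x] by (auto simp: Rset_def)
  moreover have "z \<in> Dset (Node l x r) y"
    using Dset_subtree[OF t, of y x] z y Rset_subset_Dset[of t x] x by auto
  ultimately show ?thesis
    using x set_subtree_subset[of r y] by (fastforce simp: Rset_def Dset_def split: if_splits)
qed

definition precedes :: "'a tree \<Rightarrow> 'a \<Rightarrow> 'a \<Rightarrow> bool" where
  "precedes t x y \<longleftrightarrow> list_index (preorder t) x < list_index (preorder t) y"

lemma precedes_irrefl: "\<not> precedes t x x"
  by (simp add: precedes_def)
lemma precedes_asym: "precedes t x y \<Longrightarrow> \<not> precedes t y x"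
  by (simp add: precedes_def)
lemma precedes_trans: "precedes t x y \<Longrightarrow> precedes t y z \<Longrightarrow> precedes t x z"
  by (simp add: precedes_def)

lemma precedes_total: "x \<in> set_tree t \<Longrightarrow> x \<noteq> y \<Longrightarrow> precedes t x y \<or> precedes t y x"
  unfolding precedes_def using list_index_inj[of x "preorder t" y] by fastforce

lemma precedes_memD: "precedes t x y \<Longrightarrow> x \<in> set_tree t"
  unfolding precedes_def
  by (metis list_index_le_length list_index_less_length_iff order.strict_trans2 set_preorder)

lemma distinct_preorder_if_bst: "bst t \<Longrightarrow> distinct (preorder t)"
proof (induction t)
  case (Node l a r)
  then have "set_tree l \<inter> set_tree r = {}" "a \<notin> set_tree l" "a \<notin> set_tree r"
    by fastforce+
  then show ?case using Node by auto
qed simp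

lemma Lset_Rset_Node_iff:
  assumes "bst (Node l a r)"
  shows "(\<exists>w. x \<in> Lset (Node l a r) w \<and> y \<in> Rset (Node l a r) w) \<longleftrightarrow>
     x \<in> set_tree l \<and> y \<in> set_tree r \<or> (\<exists>w. x \<in> Lset l w \<and> y \<in> Rset l w) \<or>
     (\<exists>w. x \<in> Lset r w \<and> y \<in> Rset r w)" (is "?lhs \<longleftrightarrow> ?rhs")
proof
  assume ?lhs
  then obtain w where w: "x \<in> Lset (Node l a r) w" "y \<in> Rset (Node l a r) w" by blast
  then have "w \<in> set_tree (Node l a r)" using Lset_memD by fast
  moreover have "w \<notin> set_tree l" if "w \<in> set_tree r" using assms that by force
  ultimately show ?rhs using w by (auto simp: Lset_Node Rset_Node split: if_splits)
next
  have a: "a \<notin> set_tree l" "a \<notin> set_tree r" using assms by auto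
  have r: "w \<notin> set_tree l" if "w \<in> set_tree r" for w using assms that by force
  assume ?rhs
  then consider "x \<in> set_tree l" "y \<in> set_tree r"
    | w where "x \<in> Lset l w" "y \<in> Rset l w" | w where "x \<in> Lset r w" "y \<in> Rset r w"
    by blast
  then show ?lhs
  proof cases
    case 1
    then show ?thesis by (intro exI[of _ a]) (simp add: Lset_Node Rset_Node)
  next
    case (2 w)
    then have "w \<in> set_tree l" using Lset_memD by fast
    then show ?thesis using 2 a by (intro exI[of _ w]) (auto simp: Lset_Node Rset_Node)
  next
    case (3 w)
    then have "w \<in> set_tree r" using Lset_memD by fast
    then show ?thesis using 3 a r by (intro exI[of _ w]) (auto simp: Lset_Node Rset_Node)
  qed
qed

lemma precedes_iff:
  assumes "bst t" "x \<in> set_tree t" "y \<in> set_tree t" "x \<noteq> y"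
  shows "precedes t x y \<longleftrightarrow> y \<in> Dset t x \<or> (\<exists>w. x \<in> Lset t w \<and> y \<in> Rset t w)"
  using assms
proof (induction t)
  case (Node l a r)
  have disj: "a \<notin> set_tree l" "a \<notin> set_tree r" "set_tree l \<inter> set_tree r = {}"
    using Node.prems(1) by fastforce+
  have pre: "precedes (Node l a r) x y \<longleftrightarrow>
      x = a \<or> x \<in> set_tree l \<and> y \<in> set_tree r \<or>
      x \<in> set_tree l \<and> y \<in> set_tree l \<and> precedes l x y \<or>
      x \<in> set_tree r \<and> y \<in> set_tree r \<and> precedes r x y"
    using Node.prems(2-4) disj list_index_less_length_iff[of "preorder l" x]
      list_index_less_length_iff[of "preorder l" y]
    by (auto simp: precedes_def list_index_append)
  have D: "y \<in> Dset (Node l a r) x \<longleftrightarrow>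
      x = a \<or> x \<in> set_tree l \<and> y \<in> Dset l x \<or> x \<in> set_tree r \<and> y \<in> Dset r x"
    using Node.prems(2,3) disj by (auto simp: Dset_Node)
  have IHl: "precedes l x y \<longleftrightarrow> y \<in> Dset l x \<or> (\<exists>w. x \<in> Lset l w \<and> y \<in> Rset l w)"
    if "x \<in> set_tree l" "y \<in> set_tree l" using Node.IH(1) Node.prems that by auto
  have IHr: "precedes r x y \<longleftrightarrow> y \<in> Dset r x \<or> (\<exists>w. x \<in> Lset r w \<and> y \<in> Rset r w)"
    if "x \<in> set_tree r" "y \<in> set_tree r" using Node.IH(2) Node.prems that by auto
  have mem: "z \<in> Lset s w \<Longrightarrow> z \<in> set_tree s" "z \<in> Rset s w \<Longrightarrow> z \<in> set_tree s"
    "z \<in> Dset s w \<Longrightarrow> z \<in> set_tree s" for s w z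
    using Lset_memD Rset_memD Dset_memD by fast+
  show ?case
  proof (cases "x = a")
    case False
    then consider "x \<in> set_tree l" "y = a" | "x \<in> set_tree l" "y \<in> set_tree l"
      | "x \<in> set_tree l" "y \<in> set_tree r" | "x \<in> set_tree r" "y = a"
      | "x \<in> set_tree r" "y \<in> set_tree l" | "x \<in> set_tree r" "y \<in> set_tree r"
      using Node.prems(2,3) by auto
    then show ?thesis
      unfolding pre Lset_Rset_Node_iff[OF Node.prems(1)] D
      by cases (use disj False in \<open>auto dest: mem simp: IHl IHr\<close>)
  qed (use pre D in auto)
qed simp

lemma precedes_if_Dset: "bst t \<Longrightarrow> y \<in> Dset t x \<Longrightarrow> y \<noteq> x \<Longrightarrow> precedes t x y"
  using precedes_iff Dset_memD by metis

lemma precedes_if_Lset_Rset: "bst t \<Longrightarrow> x \<in> Lset t w \<Longrightarrow> y \<in> Rset t w \<Longrightarrow> precedes t x y"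
  using precedes_iff Lset_memD Rset_memD Lset_Rset_disjoint by metis

lemma not_Dset_if_precedes: "bst t \<Longrightarrow> precedes t y x \<Longrightarrow> y \<notin> Dset t x"
  using precedes_if_Dset precedes_asym precedes_irrefl by metis

lemma Lset_if_precedes_greater:
  assumes t: "bst t" and y: "y \<in> set_tree t" and xy: "precedes t x y" "y < x"
  shows "y \<in> Lset t x"
proof -
  have "y \<in> Dset t x \<or> (\<exists>w. x \<in> Lset t w \<and> y \<in> Rset t w)"
    using precedes_iff[OF t precedes_memD[OF xy(1)] y] xy by auto
  moreover have "x < y" if "x \<in> Lset t w" "y \<in> Rset t w" for w
    using Lset_less[OF t that(1)] Rset_greater[OF t that(2)] by simp
  ultimately show ?thesis using Lset_iff[OF t] xy(2) by fastforce
qed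

lemma less_Dset_if_precedes:
  assumes t: "bst t" and ab: "precedes t a b" "a < b" and z: "z \<in> Dset t b"
  shows "a < z"
proof -
  have "b \<in> Dset t a \<or> (\<exists>w. a \<in> Lset t w \<and> b \<in> Rset t w)"
    using precedes_iff[OF t precedes_memD[OF ab(1)]] Dset_memD[OF z] ab by auto
  then obtain w where "a \<le> w" "b \<in> Rset t w"
    using Rset_iff[OF t] Lset_less[OF t] ab(2) by fastforce
  then show ?thesis using Rset_trans[OF t _ z] Rset_greater[OF t] by fastforce
qed

lemma Dset_less_if_precedes:
  assumes t: "bst t" and ab: "precedes t a b" "b < a" and z: "z \<in> Dset t b"
  shows "z < a"
  using Lset_if_precedes_greater[OF t _ ab] Dset_memD[OF z] Lset_trans[OF t _ z] Lset_less[OF t]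
  by blast

lemma no_231_in_preorder:
  assumes t: "bst t" and c: "c \<in> set_tree t"
    and order: "precedes t a b" "precedes t b c" and less: "c < a" "a < b"
  shows False
proof -
  have "c \<in> Dset t b \<or> (\<exists>w. b \<in> Lset t w \<and> c \<in> Rset t w)"
    using precedes_iff[OF t precedes_memD[OF order(2)] c] order(2) precedes_irrefl by metis
  then show False
    using less_Dset_if_precedes[OF t order(1) less(2)] Lset_less[OF t] Rset_greater[OF t] less
    by fastforce
qed

lemma Dset_interval:
  assumes t: "bst t" and y: "y \<in> set_tree t" and ab: "a \<in> Dset t u" "b \<in> Dset t u"
    and aby: "a \<le> y" "y \<le> b"
  shows "y \<in> Dset t u"
proof (rule ccontr)
  assume yu: "y \<notin> Dset t u"
  have u: "u \<in> set_tree t" "u \<noteq> y" using Dset_memD[OF ab(1)] yu self_in_Dset by metis+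
  have "a < y" "y < b" using aby ab yu by (auto simp: order.order_iff_strict)
  consider w where "u \<in> Lset t w" "y \<in> Rset t w" | "u \<in> Dset t y"
    | w where "y \<in> Lset t w" "u \<in> Rset t w"
    using precedes_total[OF u(1,2)] precedes_iff[OF t u(1) y u(2)] precedes_iff[OF t y u(1)] u(2) yu
    by metis
  then show False
  proof cases
    case (1 w)
    then show False using Lset_trans[OF t 1(1) ab(2)] Lset_less[OF t] Rset_greater[OF t] \<open>y < b\<close>
      by fastforce
  next
    case 2
    then show False
      using Dset_cases[OF 2] u(2) Lset_trans[OF t _ ab(2)] Rset_trans[OF t _ ab(1)]
        Lset_less[OF t] Rset_greater[OF t] \<open>a < y\<close> \<open>y < b\<close>
      by fastforce
  next
    case (3 w)
    then show False using Rset_trans[OF t 3(2) ab(1)] Lset_less[OF t] Rset_greater[OF t] \<open>a < y\<close>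
      by fastforce
  qed
qed

lemma Dset_contiguous:
  assumes t: "bst t" and x: "x \<in> Dset t w" and z: "z \<in> set_tree t"
    and order: "precedes t w z" "precedes t z x"
  shows "z \<in> Dset t w"
proof (rule ccontr)
  assume zw: "z \<notin> Dset t w"
  have w: "w \<in> set_tree t" "x \<in> set_tree t" using Dset_memD[OF x] by blast+
  obtain v where v: "w \<in> Lset t v" "z \<in> Rset t v"
    using precedes_iff[OF t w(1) z] order(1) precedes_irrefl zw by metis
  have xv: "x \<in> Lset t v" using Lset_trans[OF t v(1) x] .
  have "x \<in> Dset t z \<or> (\<exists>v'. z \<in> Lset t v' \<and> x \<in> Rset t v')"
    using precedes_iff[OF t z w(2)] order(2) precedes_irrefl by metis
  then show False
  proof
    assume "x \<in> Dset t z"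
    then show False using Rset_trans[OF t v(2)] xv Lset_Rset_disjoint[OF t] by blast
  next
    assume "\<exists>v'. z \<in> Lset t v' \<and> x \<in> Rset t v'"
    then have "z < x" using Lset_less[OF t] Rset_greater[OF t] by fastforce
    moreover have "x < z" using xv v(2) Lset_less[OF t] Rset_greater[OF t] by fastforce
    ultimately show False by simp
  qed
qed

lemma preorder_subtree_infix: "\<exists>us vs. preorder t = us @ preorder (subtree t x) @ vs"
proof (induction t)
  case (Node l a r)
  show ?case
  proof (cases "x = a")
    case False
    obtain us vs where l: "preorder l = us @ preorder (subtree l x) @ vs" using Node.IH(1) by blast
    obtain us' vs' where r: "preorder r = us' @ preorder (subtree r x) @ vs'" using Node.IH(2) by blast
    show ?thesis
    proof (cases "x \<in> set_tree l")
      case True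
      then show ?thesis using False l by (intro exI[where x = "a # us"] exI[where x = "vs @ preorder r"]) simp
    next
      case True': False
      then show ?thesis using False r by (intro exI[where x = "a # preorder l @ us'"] exI[where x = vs']) simp
    qed
  qed (intro exI[where x = "[]"], simp)
qed simp

lemma lchild_shape: "is_lchild t c p \<Longrightarrow> \<exists>l r r'. subtree t p = Node (Node l c r) p r'"
  using subtree_eq_Node[of p t] by (cases "lsub (subtree t p)") (auto simp: is_lchild_def)

lemma rchild_shape: "is_rchild t c p \<Longrightarrow> \<exists>l l' r. subtree t p = Node l p (Node l' c r)"
  using subtree_eq_Node[of p t] by (cases "rsub (subtree t p)") (auto simp: is_rchild_def)

lemma lchild_Dset:
  assumes "bst t" "is_lchild t c p"
  shows "Dset t c = Lset t p" "c \<in> Lset t p"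
proof -
  obtain l r r' where p: "subtree t p = Node (Node l c r) p r'" using lchild_shape[OF assms(2)] by blast
  then have "c \<in> Dset t p" by (simp add: Dset_def)
  moreover have "c \<noteq> p" using bst_subtree[OF assms(1), of p] p by fastforce
  ultimately show "Dset t c = Lset t p" "c \<in> Lset t p"
    using Dset_subtree[OF assms(1), of c p] p by (auto simp: Dset_def Lset_def)
qed

lemma rchild_Dset:
  assumes "bst t" "is_rchild t c p"
  shows "Dset t c = Rset t p" "c \<in> Rset t p"
proof -
  obtain l l' r where p: "subtree t p = Node l p (Node l' c r)" using rchild_shape[OF assms(2)] by blast
  then have "c \<in> Dset t p" by (simp add: Dset_def)
  moreover have "c \<noteq> p" "c \<notin> set_tree l" using bst_subtree[OF assms(1), of p] p by force+
  ultimately show "Dset t c = Rset t p" "c \<in> Rset t p"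
    using Dset_subtree[OF assms(1), of c p] p by (auto simp: Dset_def Rset_def)
qed

lemma lchild_exists: "x \<in> Lset t p \<Longrightarrow> \<exists>c. is_lchild t c p"
  using Lset_memD[of x t p] by (auto simp: is_lchild_def Lset_def)

lemma rchild_exists: "x \<in> Rset t p \<Longrightarrow> \<exists>c. is_rchild t c p"
  using Rset_memD[of x t p] by (auto simp: is_rchild_def Rset_def)

lemma precedes_lchild_iff:
  assumes t: "bst t" and c: "is_lchild t c p" and y: "y \<in> set_tree t"
  shows "precedes t y c \<longleftrightarrow> y = p \<or> precedes t y p"
proof -
  obtain l r r' where "subtree t p = Node (Node l c r) p r'" using lchild_shape[OF c] by blast
  then obtain us vs where pre: "preorder t = us @ p # c # preorder l @ preorder r @ preorder r' @ vs"
    using preorder_subtree_infix[of t p] by auto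
  then have "distinct (us @ p # c # preorder l @ preorder r @ preorder r' @ vs)"
    using distinct_preorder_if_bst[OF t] by simp
  then have "list_index (preorder t) c = Suc (list_index (preorder t) p)" "p \<in> set (preorder t)"
    unfolding pre by (auto simp: list_index_append)
  then show ?thesis
    unfolding precedes_def using list_index_inj[of p "preorder t" y] by auto
qed

lemma precedes_rchild_cases:
  assumes t: "bst t" and c: "is_rchild t c x" and z: "z \<in> set_tree t" "precedes t z c"
  shows "z = x \<or> z \<in> Lset t x \<or> precedes t z x"
proof -
  obtain l l' r where s: "subtree t x = Node l x (Node l' c r)" using rchild_shape[OF c] by blast
  then obtain us vs where pre: "preorder t = us @ x # preorder l @ c # (preorder l' @ preorder r) @ vs"
    using preorder_subtree_infix[of t x] by auto
  then have "distinct (us @ x # preorder l @ c # (preorder l' @ preorder r) @ vs)"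
    using distinct_preorder_if_bst[OF t] by simp
  then have "list_index (preorder t) c = length us + Suc (length (preorder l))"
    "list_index (preorder t) x = length us"
    unfolding pre by (auto simp: list_index_append)
  moreover have "Lset t x = set_tree l" using s by (simp add: Lset_def)
  ultimately show ?thesis
    using z unfolding precedes_def pre
    by (auto simp: list_index_append list_index_less_length_iff split: if_splits)
qed

definition is_child :: "'a tree \<Rightarrow> 'a \<Rightarrow> 'a \<Rightarrow> bool" where
  "is_child t c p \<longleftrightarrow> is_lchild t c p \<or> is_rchild t c p"

lemma Dset_root: "t \<noteq> Leaf \<Longrightarrow> Dset t (value t) = set_tree t"
  by (cases t) (auto simp: Dset_def)

lemma Dset_comparable:
  assumes t: "bst t" and c: "c \<in> Dset t p" "c \<in> Dset t p'"
  shows "p \<in> Dset t p' \<or> p' \<in> Dset t p"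
proof -
  have p: "p \<in> set_tree t" "p' \<in> set_tree t" using Dset_memD c by metis+
  have "\<not> (x \<in> Lset t w \<and> y \<in> Rset t w)" if "c \<in> Dset t x" "c \<in> Dset t y" for x y w
    using that Lset_trans[OF t] Rset_trans[OF t] Lset_Rset_disjoint[OF t] by blast
  then show ?thesis
    using precedes_total[OF p(1)] precedes_iff[OF t p] precedes_iff[OF t p(2,1)] self_in_Dset[OF p(1)] c
    by metis
qed

lemma is_child_Dset:
  assumes t: "bst t" and cp: "is_child t c p"
  shows "c \<in> Dset t p" "p \<notin> Dset t c" "\<And>z. z \<in> Dset t p \<Longrightarrow> z = p \<or> z \<in> Dset t c \<or> c \<notin> Dset t z"
proof -
  have "c \<in> Dset t p \<and> p \<notin> Dset t c \<and> (\<forall>z \<in> Dset t p. z = p \<or> z \<in> Dset t c \<or> c \<notin> Dset t z)"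
    using cp unfolding is_child_def
  proof
    assume "is_lchild t c p"
    note c = lchild_Dset[OF t this]
    then show ?thesis
      using Dset_cases Rset_trans[OF t] Lset_Rset_disjoint[OF t] Lset_subset_Dset Lset_less[OF t]
      by fastforce
  next
    assume "is_rchild t c p"
    note c = rchild_Dset[OF t this]
    then show ?thesis
      using Dset_cases Lset_trans[OF t] Lset_Rset_disjoint[OF t] Rset_subset_Dset Rset_greater[OF t]
      by fastforce
  qed
  then show "c \<in> Dset t p" "p \<notin> Dset t c" "\<And>z. z \<in> Dset t p \<Longrightarrow> z = p \<or> z \<in> Dset t c \<or> c \<notin> Dset t z"
    by blast+
qed

lemma parent_eqI:
  assumes t: "bst t" and cp: "is_child t c p"
  shows "parent t c = p"
proof -
  have "p' = p" if cp': "is_child t c p'" for p'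
  proof -
    have "p \<in> Dset t p' \<or> p' \<in> Dset t p"
      using Dset_comparable[OF t] is_child_Dset(1)[OF t cp] is_child_Dset(1)[OF t cp'] by blast
    then show ?thesis
      using is_child_Dset[OF t cp] is_child_Dset[OF t cp'] by blast
  qed
  then show ?thesis using cp unfolding parent_def is_child_def by (metis (no_types, lifting) the_equality)
qed

lemma is_child_neq_root:
  assumes t: "bst t" and cp: "is_child t c p"
  shows "c \<noteq> value t"
proof
  assume c: "c = value t"
  have "t \<noteq> Leaf" using is_child_Dset(1)[OF t cp] by (auto simp: Dset_def)
  then have "p \<in> Dset t c" using c Dset_root Dset_memD is_child_Dset(1)[OF t cp] by metis
  then show False using is_child_Dset(2)[OF t cp] by blast
qed

lemma is_child_Node:
  assumes t: "bst (Node l a r)" and cp: "is_child l c p \<or> is_child r c p"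
  shows "is_child (Node l a r) c p"
proof -
  have "p \<in> set_tree l \<or> p \<in> set_tree r"
    using cp by (auto simp: is_child_def is_lchild_def is_rchild_def)
  moreover have "p \<noteq> a" "p \<in> set_tree r \<Longrightarrow> p \<notin> set_tree l" using t calculation by force+
  ultimately show ?thesis using cp by (auto simp: is_child_def is_lchild_def is_rchild_def)
qed

lemma is_child_root_Node:
  "l \<noteq> Leaf \<Longrightarrow> is_child (Node l a r) (value l) a"
  "r \<noteq> Leaf \<Longrightarrow> is_child (Node l a r) (value r) a"
  by (auto simp: is_child_def is_lchild_def is_rchild_def)

lemma parent_exists: "bst t \<Longrightarrow> i \<in> set_tree t \<Longrightarrow> i \<noteq> value t \<Longrightarrow> \<exists>p. is_child t i p"
proof (induction t)
  case (Node l a r)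
  then consider "i \<in> set_tree l" | "i \<in> set_tree r" by auto
  then show ?case
  proof cases
    case 1
    then have "l \<noteq> Leaf" by auto
    then show ?thesis using 1 Node is_child_Node[OF Node.prems(1)] is_child_root_Node(1)[of l a r]
      by (cases "i = value l") auto
  next
    case 2
    then have "r \<noteq> Leaf" by auto
    then show ?thesis using 2 Node is_child_Node[OF Node.prems(1)] is_child_root_Node(2)[of r l a]
      by (cases "i = value r") auto
  qed
qed simp

lemma Dset_rtrancl_is_child:
  "bst t \<Longrightarrow> a \<in> Dset t x \<Longrightarrow> (a, x) \<in> {(c, p). is_child t c p}\<^sup>*"
proof (induction t arbitrary: a x)
  case (Node l v r)
  let ?R = "\<lambda>t. {(c, p). is_child t c p}"
  have mono: "(?R l)\<^sup>* \<subseteq> (?R (Node l v r))\<^sup>*" "(?R r)\<^sup>* \<subseteq> (?R (Node l v r))\<^sup>*"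
    using is_child_Node[OF Node.prems(1)] by (auto intro!: rtrancl_mono)
  have root: "(z, v) \<in> (?R (Node l v r))\<^sup>*" if z: "z \<in> set_tree (Node l v r)" for z
  proof -
    consider "z = v" | "z \<in> set_tree l" | "z \<in> set_tree r" using z by auto
    then show ?thesis
    proof cases
      case 2
      then have "(z, value l) \<in> (?R l)\<^sup>*" using Node Dset_root[of l] by fastforce
      then have "(z, value l) \<in> (?R (Node l v r))\<^sup>*" using mono by blast
      moreover have "(value l, v) \<in> ?R (Node l v r)"
        using is_child_root_Node(1)[of l v r] 2 by fastforce
      ultimately show ?thesis by (rule rtrancl_into_rtrancl)
    next
      case 3
      then have "(z, value r) \<in> (?R r)\<^sup>*" using Node Dset_root[of r] by fastforce
      then have "(z, value r) \<in> (?R (Node l v r))\<^sup>*" using mono by blast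
      moreover have "(value r, v) \<in> ?R (Node l v r)"
        using is_child_root_Node(2)[of r l v] 3 by fastforce
      ultimately show ?thesis by (rule rtrancl_into_rtrancl)
    qed simp
  qed
  show ?case
    using Node mono root Dset_memD[OF Node.prems(2)] by (auto simp: Dset_Node split: if_splits)
qed (simp add: Dset_def)

lemma set_rspine_subset: "set (rspine t) \<subseteq> set_tree t"
  by (induction t) auto

lemma BR_subset_Dset: "BR t m \<subseteq> Dset t m"
  by (simp add: BR_def Dset_def set_rspine_subset)

lemma rspine_or_Lset: "bst t \<Longrightarrow> i \<in> set_tree t \<Longrightarrow> i \<in> set (rspine t) \<or> (\<exists>u \<in> set_tree t. i \<in> Lset t u)"
proof (induction t)
  case (Node l a r)
  consider "i = a" | "i \<in> set_tree l" | "i \<in> set_tree r" using Node.prems(2) by auto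
  then show ?case
  proof cases
    case 2
    then show ?thesis by (intro disjI2 bexI[of _ a]) (auto simp: Lset_Node)
  next
    case 3
    have "Lset (Node l a r) u = Lset r u" if "u \<in> set_tree r" for u
      using Node.prems(1) that by (force simp: Lset_Node)
    moreover have "i \<in> set (rspine r) \<or> (\<exists>u \<in> set_tree r. i \<in> Lset r u)"
      using Node.IH(2) Node.prems(1) 3 by simp
    ultimately show ?thesis by force
  qed simp
qed simp

lemma butlast_rspine_iff:
  "bst t \<Longrightarrow> j \<in> set (butlast (rspine t)) \<longleftrightarrow> j \<in> set (rspine t) \<and> Rset t j \<noteq> {}"
proof (induction t)
  case (Node l a r)
  have "j \<notin> set_tree l" "j \<noteq> a" if "j \<in> set (rspine r)" for j
    using Node.prems(1) that set_rspine_subset by force+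
  moreover have "rspine r = [] \<longleftrightarrow> r = Leaf" by (cases r) auto
  ultimately show ?case using Node by (auto simp: Rset_Node)
qed simp

lemma Dset_BR_or_Lset:
  assumes t: "bst t" and i: "i \<in> Dset t m"
  shows "i \<in> BR t m \<or> (\<exists>u \<in> Dset t m. i \<in> Lset t u)"
proof -
  have "i \<in> BR t m \<or> (\<exists>u \<in> Dset t m. i \<in> Lset (subtree t m) u)"
    using rspine_or_Lset[OF bst_subtree[OF t]] i unfolding BR_def Dset_def by blast
  then show ?thesis using Lset_subtree[OF t] by auto
qed

lemma BR_minus_iff:
  assumes t: "bst t"
  shows "j \<in> BR_minus t m \<longleftrightarrow> j \<in> BR t m \<and> Rset t j \<noteq> {}"
proof -
  have "j \<in> BR_minus t m \<longleftrightarrow> j \<in> BR t m \<and> Rset (subtree t m) j \<noteq> {}"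
    unfolding BR_minus_def BR_def using butlast_rspine_iff[OF bst_subtree[OF t]] .
  then show ?thesis using Rset_subtree[OF t, of j m] BR_subset_Dset[of t m] by auto
qed

lemma Dset_interval_labels:
  assumes "bst t" "set_tree t = {1..k}" "a \<in> Dset t u" "b \<in> Dset t u" "a \<le> q" "q \<le> (b::nat)"
  shows "q \<in> Dset t u"
proof (rule Dset_interval[OF assms(1) _ assms(3-6)])
  show "q \<in> set_tree t"
    using Dset_memD[OF assms(3)] Dset_memD[OF assms(4)] assms(2,5,6) by auto
qed

lemma finite_Dset: "finite (Dset t x)"
  by (simp add: Dset_def)

lemma Min_Max_Dset:
  assumes "x \<in> set_tree t"
  shows "Min (Dset t x) \<in> Dset t x" "Max (Dset t x) \<in> Dset t x"
    "z \<in> Dset t x \<Longrightarrow> Min (Dset t x) \<le> z" "z \<in> Dset t x \<Longrightarrow> z \<le> Max (Dset t x)"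
proof -
  have ne: "Dset t x \<noteq> {}" using self_in_Dset[OF assms] by blast
  show "Min (Dset t x) \<in> Dset t x" using Min_in[OF finite_Dset ne] .
  show "Max (Dset t x) \<in> Dset t x" using Max_in[OF finite_Dset ne] .
  show "z \<in> Dset t x \<Longrightarrow> Min (Dset t x) \<le> z" using Min_le[OF finite_Dset] .
  show "z \<in> Dset t x \<Longrightarrow> z \<le> Max (Dset t x)" using Max_ge[OF finite_Dset] .
qed

context
  fixes t :: "nat tree" and k :: nat
  assumes t: "bst t" and labels: "set_tree t = {1..k}"
begin

lemma lchild_Suc_Max_Dset:
  assumes c: "is_lchild t c p"
  shows "Suc (Max (Dset t c)) = p"
proof -
  note D = lchild_Dset[OF t c]
  have p: "p \<in> set_tree t" "c \<in> set_tree t" using Lset_memD[OF D(2)] by auto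
  have "Max (Dset t c) < p" using Min_Max_Dset(2)[OF p(2)] D Lset_less[OF t] by auto
  moreover have "p - 1 \<in> Dset t c"
  proof -
    have "c < p" "1 \<le> p" using Lset_less[OF t D(2)] p labels by auto
    then have "p - 1 \<in> Dset t p"
      using Dset_interval_labels[OF t labels Lset_subset_Dset[THEN subsetD, OF D(2)] self_in_Dset[OF p(1)]]
      by simp
    then show ?thesis using D Lset_iff[OF t] \<open>1 \<le> p\<close> by simp
  qed
  ultimately show ?thesis using Min_Max_Dset(4)[OF p(2)] by fastforce
qed

lemma rchild_Min_Dset:
  assumes c: "is_rchild t c p"
  shows "Min (Dset t c) = Suc p"
proof -
  note D = rchild_Dset[OF t c]
  have p: "p \<in> set_tree t" "c \<in> set_tree t" using Rset_memD[OF D(2)] by auto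
  have "p < Min (Dset t c)" using Min_Max_Dset(1)[OF p(2)] D Rset_greater[OF t] by auto
  moreover have "Suc p \<in> Dset t c"
  proof -
    have "p < c" using Rset_greater[OF t D(2)] .
    then have "Suc p \<in> Dset t p"
      using Dset_interval_labels[OF t labels self_in_Dset[OF p(1)] Rset_subset_Dset[THEN subsetD, OF D(2)]]
      by simp
    then show ?thesis using D Rset_iff[OF t] by simp
  qed
  ultimately show ?thesis using Min_Max_Dset(3)[OF p(2)] by fastforce
qed

lemma lchild_pred_Min_Dset_precedes:
  assumes c: "is_lchild t c p" and q: "q \<in> set_tree t" "Suc q = Min (Dset t c)"
  shows "precedes t q p"
proof (rule ccontr)
  note D = lchild_Dset[OF t c]
  have p: "p \<in> set_tree t" "c \<in> set_tree t" using Lset_memD[OF D(2)] by auto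
  have "q \<notin> Dset t c" "q < p"
    using Min_Max_Dset(3)[OF p(2)] self_in_Dset[OF p(2)] Lset_less[OF t D(2)] q(2) by fastforce+
  moreover assume "\<not> precedes t q p"
  ultimately have "precedes t p q" using precedes_total[OF q(1), of p] by auto
  then show False
    using Lset_if_precedes_greater[OF t q(1)] D(1) \<open>q < p\<close> \<open>q \<notin> Dset t c\<close> by blast
qed

lemma rchild_Suc_Max_Dset_precedes:
  assumes c: "is_rchild t c p" and q: "Suc (Max (Dset t c)) \<in> set_tree t"
  shows "precedes t (Suc (Max (Dset t c))) p"
proof (rule ccontr)
  note D = rchild_Dset[OF t c]
  let ?M = "Max (Dset t c)"
  have p: "p \<in> set_tree t" "c \<in> set_tree t" using Rset_memD[OF D(2)] by auto
  have Mc: "?M \<in> Dset t c" using Min_Max_Dset(2)[OF p(2)] .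
  then have M: "?M \<in> Dset t p" using D(1) Rset_subset_Dset[of t p] by auto
  have "Suc ?M \<notin> Dset t c" using Min_Max_Dset(4)[OF p(2)] by fastforce
  have "p < Suc ?M" using Rset_greater[OF t, of ?M p] Mc D(1) by simp
  moreover assume "\<not> precedes t (Suc ?M) p"
  ultimately have "precedes t p (Suc ?M)" using precedes_total[OF q, of p] by auto
  then have "Suc ?M \<in> Dset t p \<or> (\<exists>w. p \<in> Lset t w \<and> Suc ?M \<in> Rset t w)"
    using precedes_iff[OF t p(1) q] \<open>p < Suc ?M\<close> by simp
  then show False
  proof
    assume "Suc ?M \<in> Dset t p"
    then show False using D Rset_iff[OF t] \<open>Suc ?M \<notin> Dset t c\<close> \<open>p < Suc ?M\<close> by blast
  next
    assume "\<exists>w. p \<in> Lset t w \<and> Suc ?M \<in> Rset t w"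
    then obtain w where "?M < w" "w < Suc ?M"
      using Lset_trans[OF t _ M] Lset_less[OF t] Rset_greater[OF t] by blast
    then show False by simp
  qed
qed

lemma rchild_interval_Lset:
  assumes c: "is_rchild t c p" and a: "p < a" "a < c"
  shows "a \<in> Lset t c"
proof -
  note D = rchild_Dset[OF t c]
  have "p \<in> set_tree t" using Rset_memD[OF D(2)] by simp
  then have "a \<in> Dset t p"
    using Dset_interval_labels[OF t labels self_in_Dset Rset_subset_Dset[THEN subsetD, OF D(2)]] a
    by simp
  then show ?thesis using D(1) Lset_iff[OF t] Rset_iff[OF t] a by simp
qed

end

text \<open>The shaded boxes of sigma(P,e), each box (rho i - 1, j) recorded as (i, j): its column is
  the one just left of the entry of vertex i (see sigma_C_eq_shading).\<close>
definition shading :: "nat tree \<Rightarrow> (nat \<Rightarrow> bool) \<Rightarrow> (nat \<times> nat) set" where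
  "shading P e = {(i, j). i \<in> set_tree P \<and> (j \<in> BR_minus P i \<or>
      (i \<noteq> value P \<and> e i \<and> (j = Min (Dset P i) - 1 \<or> j = Max (Dset P i))))}"

text \<open>For a candidate occurrence g of P in T, with the entry of a vertex v of P represented by the
  vertex g v of T: the point y lies in the column left of the entry of i, resp. in the row between
  the values j and j + 1 (a bound is dropped when it is not a label of P).\<close>
definition in_column :: "nat tree \<Rightarrow> nat tree \<Rightarrow> (nat \<Rightarrow> nat) \<Rightarrow> nat \<Rightarrow> nat \<Rightarrow> bool" where
  "in_column T P g i y \<longleftrightarrow>
     precedes T y (g i) \<and> (\<forall>a \<in> set_tree P. precedes P a i \<longrightarrow> precedes T (g a) y)"

definition in_row :: "nat tree \<Rightarrow> (nat \<Rightarrow> nat) \<Rightarrow> nat \<Rightarrow> nat \<Rightarrow> bool" where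
  "in_row P g j y \<longleftrightarrow> (j \<in> set_tree P \<longrightarrow> g j < y) \<and> (Suc j \<in> set_tree P \<longrightarrow> y < g (Suc j))"

text \<open>An occurrence of the mesh pattern sigma(P,e) in the preorder word of T, read in T itself.\<close>
definition occurrence :: "nat tree \<Rightarrow> nat tree \<Rightarrow> (nat \<Rightarrow> bool) \<Rightarrow> (nat \<Rightarrow> nat) \<Rightarrow> bool" where
  "occurrence T P e g \<longleftrightarrow> (\<forall>a \<in> set_tree P. g a \<in> set_tree T) \<and>
     (\<forall>a \<in> set_tree P. \<forall>b \<in> set_tree P. g a < g b \<longleftrightarrow> a < b) \<and>
     (\<forall>a \<in> set_tree P. \<forall>b \<in> set_tree P. precedes T (g a) (g b) \<longleftrightarrow> precedes P a b) \<and>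
     (\<forall>(i, j) \<in> shading P e. \<forall>y \<in> set_tree T. in_column T P g i y \<longrightarrow> \<not> in_row P g j y)"

context
  fixes T P :: "nat tree" and e :: "nat \<Rightarrow> bool" and g :: "nat \<Rightarrow> nat" and k :: nat
  assumes T: "bst T" and P: "bst P" and labels: "set_tree P = {1..k}"
    and g: "occurrence T P e g"
begin

lemma occurrence_mem: "a \<in> set_tree P \<Longrightarrow> g a \<in> set_tree T"
  using g unfolding occurrence_def by blast

lemma occurrence_less_iff: "a \<in> set_tree P \<Longrightarrow> b \<in> set_tree P \<Longrightarrow> g a < g b \<longleftrightarrow> a < b"
  using g unfolding occurrence_def by blast

lemma occurrence_precedes_iff:
  "a \<in> set_tree P \<Longrightarrow> b \<in> set_tree P \<Longrightarrow> precedes T (g a) (g b) \<longleftrightarrow> precedes P a b"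
  using g unfolding occurrence_def by blast

lemma occurrence_not_shaded:
  "(i, j) \<in> shading P e \<Longrightarrow> y \<in> set_tree T \<Longrightarrow> in_column T P g i y \<Longrightarrow> in_row P g j y \<Longrightarrow> False"
  using g unfolding occurrence_def by blast

lemma occurrence_Lset:
  assumes a: "a \<in> Lset P i"
  shows "g a \<in> Lset T (g i)"
proof -
  have ai: "a \<in> set_tree P" "i \<in> set_tree P" using Lset_memD[OF a] by auto
  have "a < i" using Lset_less[OF P a] .
  moreover have "precedes P i a"
    using precedes_if_Dset[OF P Lset_subset_Dset[THEN subsetD, OF a]] calculation by simp
  ultimately show ?thesis
    using Lset_if_precedes_greater[OF T occurrence_mem[OF ai(1)]] occurrence_less_iff[OF ai]
      occurrence_precedes_iff[OF ai(2,1)]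
    by simp
qed

lemma in_column_exists:
  assumes y: "y \<in> set_tree T" "y \<notin> g ` set_tree P" and i: "i \<in> set_tree P" "precedes T y (g i)"
  shows "\<exists>m \<in> set_tree P. in_column T P g m y"
proof -
  define S where "S = {a \<in> set_tree P. precedes T y (g a)}"
  obtain m where m: "m \<in> S" and least: "\<And>a. a \<in> S \<Longrightarrow> list_index (preorder P) m \<le> list_index (preorder P) a"
    using ex_has_least_nat[of "\<lambda>a. a \<in> S" i "list_index (preorder P)"] i by (auto simp: S_def)
  have "precedes T (g a) y" if a: "a \<in> set_tree P" "precedes P a m" for a
  proof -
    have "a \<notin> S" using least a(2) by (fastforce simp: precedes_def)
    moreover have "y \<noteq> g a" using y(2) a(1) by blast
    ultimately show ?thesis using precedes_total[OF y(1), of "g a"] a(1) by (auto simp: S_def)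
  qed
  then show ?thesis using m by (auto simp: S_def in_column_def)
qed

lemma not_in_column_Lset_Rset:
  assumes m: "m \<in> Lset P u" and i: "i \<in> Rset P u" "g i \<in> Lset T w"
  shows "\<not> in_column T P g m w"
proof
  assume column: "in_column T P g m w"
  have mP: "m \<in> set_tree P" "u \<in> set_tree P" "i \<in> set_tree P"
    using Lset_memD[OF m] Rset_memD[OF i(1)] by auto
  have "precedes P u m"
    using precedes_if_Dset[OF P Lset_subset_Dset[THEN subsetD, OF m]] Lset_less[OF P m] by simp
  then have "precedes T (g u) w" using column mP(2) unfolding in_column_def by blast
  moreover have "g m < g u" "g u < g i"
    using occurrence_less_iff mP Lset_less[OF P m] Rset_greater[OF P i(1)] by auto
  ultimately show False
    using no_231_in_preorder[OF T occurrence_mem[OF mP(1)]] column Lset_less[OF T i(2)]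
    unfolding in_column_def by force
qed

lemma not_in_column_above_Lset:
  assumes u: "u \<in> Dset P m" "i \<in> Lset P u" and j: "j \<in> Dset P i"
    and w: "w \<notin> g ` set_tree P" "g i \<in> Lset T w" "g j \<in> Rset T w"
  shows "\<not> in_column T P g m w"
proof
  assume column: "in_column T P g m w"
  have uP: "m \<in> set_tree P" "u \<in> set_tree P" "i \<in> set_tree P"
    using Dset_memD[OF u(1)] Lset_memD[OF u(2)] by auto
  have gj: "g j \<in> Lset T (g u)" using occurrence_Lset Lset_trans[OF P u(2) j] by blast
  have w_gu: "precedes T w (g u)"
  proof (cases "u = m")
    case False
    then have "precedes T (g m) (g u)"
      using precedes_if_Dset[OF P u(1)] occurrence_precedes_iff[OF uP(1,2)] by simp
    then show ?thesis using column precedes_trans[of T w "g m" "g u"] unfolding in_column_def by blast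
  qed (use column in \<open>simp add: in_column_def\<close>)
  have gu_gi: "precedes T (g u) (g i)"
    using precedes_if_Dset[OF P Lset_subset_Dset[THEN subsetD, OF u(2)]] Lset_less[OF P u(2)]
      occurrence_precedes_iff[OF uP(2,3)] by simp
  then have "g u \<in> Dset T w"
    using Dset_contiguous[OF T Lset_subset_Dset[THEN subsetD, OF w(2)] occurrence_mem[OF uP(2)] w_gu] by simp
  moreover have "g u \<noteq> w" using w(1) uP(2) by blast
  ultimately consider "g u \<in> Lset T w" | "g u \<in> Rset T w" using Dset_cases[of "g u" T w] by blast
  then show False
  proof cases
    case 1
    have "g j \<in> Lset T w" using Lset_trans[OF T 1 Lset_subset_Dset[THEN subsetD, OF gj]] .
    then show False using Lset_Rset_disjoint[OF T] w(3) by blast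
  next
    case 2
    then show False using precedes_if_Lset_Rset[OF T w(2)] precedes_asym[OF gu_gi] by simp
  qed
qed

lemma in_column_BR:
  assumes m: "m \<in> set_tree P" "in_column T P g m w" and w: "w \<notin> g ` set_tree P"
    and i: "g i \<in> Lset T w" and j: "j \<in> Rset P i" "g j \<in> Rset T w"
  shows "i \<in> BR P m"
proof (cases "m = i")
  case True
  then show ?thesis
    using subtree_eq_Node[of i P] Rset_memD[OF j(1)] by (auto simp: BR_def)
next
  case False
  have iP: "i \<in> set_tree P" using Rset_memD[OF j(1)] by simp
  have "precedes T w (g i)"
    using precedes_if_Dset[OF T Lset_subset_Dset[THEN subsetD, OF i]] Lset_less[OF T i] by simp
  then have "\<not> precedes P i m"
    using m(2) precedes_asym[of T w "g i"] iP unfolding in_column_def by blast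
  then have "precedes P m i" using precedes_total[OF m(1) False] by blast
  then have "i \<in> Dset P m \<or> (\<exists>u. m \<in> Lset P u \<and> i \<in> Rset P u)"
    using precedes_iff[OF P m(1) iP False] by blast
  then show ?thesis
    using Dset_BR_or_Lset[OF P] not_in_column_Lset_Rset[OF _ _ i] m(2)
      not_in_column_above_Lset[OF _ _ Rset_subset_Dset[THEN subsetD, OF j(1)] w i j(2)]
    by blast
qed

lemma occurrence_rchild_interval:
  assumes r: "is_rchild P j i" and w: "g j \<in> Rset T w" and a: "i < a" "a < j"
  shows "g a \<in> Rset T w"
proof -
  have "g a \<in> Lset T (g j)" using occurrence_Lset rchild_interval_Lset[OF P labels r a] by blast
  then show ?thesis using Rset_trans[OF T w] Lset_subset_Dset[of T "g j"] by blast
qed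

lemma rchild_gap_not_image:
  assumes r: "is_rchild P j i" and w: "g i \<in> Lset T w" "g j \<in> Rset T w"
  shows "w \<notin> g ` set_tree P"
proof
  assume "w \<in> g ` set_tree P"
  then obtain a where a: "a \<in> set_tree P" "w = g a" by blast
  have "i \<in> set_tree P" "j \<in> set_tree P" using Rset_memD[OF rchild_Dset(2)[OF P r]] by auto
  then have "i < a" "a < j"
    using Lset_less[OF T w(1)] Rset_greater[OF T w(2)] occurrence_less_iff a by auto
  then show False using occurrence_rchild_interval[OF r w(2)] Rset_greater[OF T, of "g a" w] a(2) by simp
qed

lemma rchild_gap_in_row:
  assumes r: "is_rchild P j i" and w: "g i \<in> Lset T w" "g j \<in> Rset T w"
  shows "in_row P g i w"
  unfolding in_row_def
proof (intro conjI impI)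
  show "g i < w" using Lset_less[OF T w(1)] .
  have "i < j" using Rset_greater[OF P rchild_Dset(2)[OF P r]] .
  show "w < g (Suc i)" if "Suc i \<in> set_tree P"
  proof (cases "Suc i = j")
    case False
    then show ?thesis
      using occurrence_rchild_interval[OF r w(2), of "Suc i"] \<open>i < j\<close> Rset_greater[OF T] by simp
  qed (use Rset_greater[OF T w(2)] in simp)
qed

text \<open>If g j were not in R(g i), the vertex w of T with g i in L(w) and g j in R(w) would be a
  non-image point in row i and in the column of a vertex whose right branch passes through i,
  i.e. in a shaded box.\<close>
lemma occurrence_rchild_Rset:
  assumes r: "is_rchild P j i"
  shows "g j \<in> Rset T (g i)"
proof (rule ccontr)
  assume not_R: "g j \<notin> Rset T (g i)"
  note j = rchild_Dset[OF P r]
  have iP: "i \<in> set_tree P" "j \<in> set_tree P" using Rset_memD[OF j(2)] by auto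
  have "i < j" using Rset_greater[OF P j(2)] .
  then have "g i < g j" using occurrence_less_iff[OF iP] by simp
  have "precedes T (g i) (g j)"
    using precedes_if_Dset[OF P Rset_subset_Dset[THEN subsetD, OF j(2)]] \<open>i < j\<close>
      occurrence_precedes_iff[OF iP] by simp
  moreover have "g j \<notin> Dset T (g i)" using not_R Rset_iff[OF T] \<open>g i < g j\<close> by simp
  ultimately obtain w where w: "g i \<in> Lset T w" "g j \<in> Rset T w"
    using precedes_iff[OF T occurrence_mem[OF iP(1)] occurrence_mem[OF iP(2)]] \<open>g i < g j\<close> by auto
  have wT: "w \<in> set_tree T" using Lset_memD[OF w(1)] by simp
  have "precedes T w (g i)"
    using precedes_if_Dset[OF T Lset_subset_Dset[THEN subsetD, OF w(1)]] Lset_less[OF T w(1)] by simp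
  then obtain m where m: "m \<in> set_tree P" "in_column T P g m w"
    using in_column_exists[OF wT rchild_gap_not_image[OF r w] iP(1)] by blast
  have "i \<in> BR_minus P m"
    using in_column_BR[OF m rchild_gap_not_image[OF r w] w(1) j(2) w(2)] BR_minus_iff[OF P] j(2) by blast
  then have "(m, i) \<in> shading P e" using m(1) by (simp add: shading_def)
  then show False using occurrence_not_shaded wT m(2) rchild_gap_in_row[OF r w] by blast
qed

lemma occurrence_child_Dset: "is_child P c p \<Longrightarrow> g c \<in> Dset T (g p)"
  unfolding is_child_def
proof (elim disjE)
  assume "is_lchild P c p"
  then have "g c \<in> Lset T (g p)" using lchild_Dset(2)[OF P] occurrence_Lset by blast
  then show ?thesis using Lset_subset_Dset by fast
next
  assume "is_rchild P c p"
  then show ?thesis using occurrence_rchild_Rset Rset_subset_Dset by fast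
qed

lemma occurrence_Dset:
  assumes a: "a \<in> Dset P i"
  shows "g a \<in> Dset T (g i)"
  using Dset_rtrancl_is_child[OF P a]
proof (induction rule: converse_rtrancl_induct)
  case base
  show ?case using self_in_Dset[OF occurrence_mem] Dset_memD[OF a] by blast
next
  case (step a b)
  then show ?case using occurrence_child_Dset[of a b] Dset_trans[OF T] by blast
qed

lemma occurrence_Dset_less:
  assumes "g i \<in> Lset T y" "a \<in> Dset P i"
  shows "g a < y"
  using Lset_less[OF T Lset_trans[OF T assms(1) occurrence_Dset[OF assms(2)]]] .

lemma occurrence_Dset_greater:
  assumes "g i \<in> Rset T y" "a \<in> Dset P i"
  shows "y < g a"
  using Rset_greater[OF T Rset_trans[OF T assms(1) occurrence_Dset[OF assms(2)]]] .

lemma lchild_in_row_Max: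
  assumes c: "is_lchild P i p" and y: "y \<in> Lset T (g p)" "g i \<in> Lset T y"
  shows "in_row P g (Max (Dset P i)) y"
proof -
  have "i \<in> set_tree P" using Lset_memD[OF lchild_Dset(2)[OF P c]] by simp
  then show ?thesis
    unfolding in_row_def lchild_Suc_Max_Dset[OF P labels c]
    using occurrence_Dset_less[OF y(2) Min_Max_Dset(2)] Lset_less[OF T y(1)] by simp
qed

lemma lchild_in_row_Min:
  assumes c: "is_lchild P i p" and y: "y \<in> Lset T (g p)" "g i \<in> Rset T y"
  shows "in_row P g (Min (Dset P i) - 1) y"
proof -
  let ?m = "Min (Dset P i)"
  have iL: "i \<in> Lset P p" using lchild_Dset(2)[OF P c] .
  have iP: "i \<in> set_tree P" "p \<in> set_tree P" using Lset_memD[OF iL] by auto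
  have m: "?m \<in> Dset P i" using Min_Max_Dset(1)[OF iP(1)] .
  then have "1 \<le> ?m" using Dset_memD[OF m] labels by auto
  have "g (?m - 1) < y" if q: "?m - 1 \<in> set_tree P"
  proof -
    have "precedes P (?m - 1) p"
      using lchild_pred_Min_Dset_precedes[OF P labels c q] \<open>1 \<le> ?m\<close> by simp
    moreover have "?m - 1 < p" using Min_Max_Dset(3)[OF iP(1) self_in_Dset[OF iP(1)]]
        Lset_less[OF P iL] by simp
    ultimately show ?thesis
      using less_Dset_if_precedes[OF T _ _ Lset_subset_Dset[THEN subsetD, OF y(1)]]
        occurrence_precedes_iff[OF q iP(2)] occurrence_less_iff[OF q iP(2)] by simp
  qed
  then show ?thesis
    unfolding in_row_def using occurrence_Dset_greater[OF y(2) m] \<open>1 \<le> ?m\<close> by simp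
qed

lemma rchild_in_row_Min:
  assumes c: "is_rchild P i x" and y: "y \<in> Rset T (g x)" "g i \<in> Rset T y"
  shows "in_row P g (Min (Dset P i) - 1) y"
proof -
  have "i \<in> set_tree P" using Rset_memD[OF rchild_Dset(2)[OF P c]] by simp
  then show ?thesis
    unfolding in_row_def rchild_Min_Dset[OF P labels c]
    using occurrence_Dset_greater[OF y(2) Min_Max_Dset(1)] Rset_greater[OF T y(1)]
      rchild_Min_Dset[OF P labels c] by simp
qed

lemma rchild_in_row_Max:
  assumes c: "is_rchild P i x" and y: "y \<in> Rset T (g x)" "g i \<in> Lset T y"
  shows "in_row P g (Max (Dset P i)) y"
proof -
  let ?M = "Max (Dset P i)"
  have iR: "i \<in> Rset P x" using rchild_Dset(2)[OF P c] .
  have iP: "i \<in> set_tree P" "x \<in> set_tree P" using Rset_memD[OF iR] by auto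
  have "y < g (Suc ?M)" if q: "Suc ?M \<in> set_tree P"
  proof -
    have "precedes P (Suc ?M) x" using rchild_Suc_Max_Dset_precedes[OF P labels c q] .
    moreover have "x < Suc ?M" using Min_Max_Dset(4)[OF iP(1) self_in_Dset[OF iP(1)]]
        Rset_greater[OF P iR] by simp
    ultimately show ?thesis
      using Dset_less_if_precedes[OF T _ _ Rset_subset_Dset[THEN subsetD, OF y(1)]]
        occurrence_precedes_iff[OF q iP(2)] occurrence_less_iff[OF iP(2) q] by simp
  qed
  then show ?thesis
    unfolding in_row_def using occurrence_Dset_less[OF y(2) Min_Max_Dset(2)[OF iP(1)]] by simp
qed

lemma occurrence_lchild:
  assumes c: "is_lchild P i p" and ei: "e i"
  shows "is_lchild T (g i) (g p)"
proof (rule ccontr)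
  assume not_lchild: "\<not> ?thesis"
  have iL: "i \<in> Lset P p" using lchild_Dset(2)[OF P c] .
  have iP: "i \<in> set_tree P" "p \<in> set_tree P" using Lset_memD[OF iL] by auto
  obtain y where y: "is_lchild T y (g p)" using lchild_exists[OF occurrence_Lset[OF iL]] by blast
  note yL = lchild_Dset[OF T y]
  have yT: "y \<in> set_tree T" using Lset_memD[OF yL(2)] by simp
  have gi: "g i \<in> Dset T y" "g i \<noteq> y" using yL occurrence_Lset[OF iL] not_lchild y by auto
  have "precedes T (g p) y"
    using precedes_if_Dset[OF T Lset_subset_Dset[THEN subsetD, OF yL(2)]] Lset_less[OF T yL(2)] by simp
  then have column: "in_column T P g i y"
    unfolding in_column_def
    using precedes_if_Dset[OF T gi] precedes_lchild_iff[OF P c] occurrence_precedes_iff[OF _ iP(2)]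
      precedes_trans[of T _ "g p" y]
    by blast
  have "i \<noteq> value P" using is_child_neq_root[OF P] c unfolding is_child_def by blast
  then have "(i, Max (Dset P i)) \<in> shading P e" "(i, Min (Dset P i) - 1) \<in> shading P e"
    using iP(1) ei by (simp_all add: shading_def)
  moreover consider "g i \<in> Lset T y" | "g i \<in> Rset T y" using Dset_cases[OF gi(1)] gi(2) by blast
  ultimately show False
    using occurrence_not_shaded[OF _ yT column] lchild_in_row_Max[OF c yL(2)] lchild_in_row_Min[OF c yL(2)]
    by metis
qed

lemma occurrence_rchild:
  assumes c: "is_rchild P i x" and ei: "e i"
  shows "is_rchild T (g i) (g x)"
proof (rule ccontr)
  assume not_rchild: "\<not> ?thesis"
  have iR: "i \<in> Rset P x" using rchild_Dset(2)[OF P c] .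
  have iP: "i \<in> set_tree P" "x \<in> set_tree P" using Rset_memD[OF iR] by auto
  obtain y where y: "is_rchild T y (g x)" using rchild_exists[OF occurrence_rchild_Rset[OF c]] by blast
  note yR = rchild_Dset[OF T y]
  have yT: "y \<in> set_tree T" using Rset_memD[OF yR(2)] by simp
  have gi: "g i \<in> Dset T y" "g i \<noteq> y" using yR occurrence_rchild_Rset[OF c] not_rchild y by auto
  have xy: "precedes T (g x) y"
    using precedes_if_Dset[OF T Rset_subset_Dset[THEN subsetD, OF yR(2)]] Rset_greater[OF T yR(2)] by simp
  have "precedes T (g a) y" if a: "a \<in> set_tree P" "precedes P a i" for a
  proof -
    consider "a = x" | "a \<in> Lset P x" | "precedes P a x" using precedes_rchild_cases[OF P c a] by blast
    then show ?thesis
    proof cases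
      case 2
      then show ?thesis using precedes_if_Lset_Rset[OF T occurrence_Lset yR(2)] by blast
    next
      case 3
      then show ?thesis using occurrence_precedes_iff[OF a(1) iP(2)] precedes_trans[OF _ xy] by blast
    qed (use xy in simp)
  qed
  then have column: "in_column T P g i y"
    unfolding in_column_def using precedes_if_Dset[OF T gi] by blast
  have "i \<noteq> value P" using is_child_neq_root[OF P] c unfolding is_child_def by blast
  then have "(i, Max (Dset P i)) \<in> shading P e" "(i, Min (Dset P i) - 1) \<in> shading P e"
    using iP(1) ei by (simp_all add: shading_def)
  moreover consider "g i \<in> Lset T y" | "g i \<in> Rset T y" using Dset_cases[OF gi(1)] gi(2) by blast
  ultimately show False
    using occurrence_not_shaded[OF _ yT column] rchild_in_row_Max[OF c yR(2)] rchild_in_row_Min[OF c yR(2)]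
    by metis
qed

end

lemma less_cases_Lset_Rset:
  assumes t: "bst t" and ab: "a \<in> set_tree t" "b \<in> set_tree t" "a < b"
  shows "b \<in> Rset t a \<or> a \<in> Lset t b \<or> (\<exists>w. a \<in> Lset t w \<and> b \<in> Rset t w)"
proof -
  have "a \<noteq> b" using ab(3) by simp
  then consider "precedes t a b" | "precedes t b a" using precedes_total[OF ab(1)] by blast
  then show ?thesis
  proof cases
    case 1
    then show ?thesis using precedes_iff[OF t ab(1,2) \<open>a \<noteq> b\<close>] Rset_iff[OF t] ab(3) by blast
  next
    case 2
    then have "a \<in> Dset t b \<or> (\<exists>w. b \<in> Lset t w \<and> a \<in> Rset t w)"
      using precedes_iff[OF t ab(2,1)] \<open>a \<noteq> b\<close> by simp
    moreover have "\<not> (b \<in> Lset t w \<and> a \<in> Rset t w)" for w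
      using Lset_less[OF t, of b w] Rset_greater[OF t, of a w] ab(3) by auto
    ultimately show ?thesis using Lset_iff[OF t] ab(3) by blast
  qed
qed

text \<open>The condition of tree_contains_def on f, with the parent of i quantified instead of computed.\<close>
definition tree_embedding :: "nat tree \<Rightarrow> nat tree \<Rightarrow> (nat \<Rightarrow> bool) \<Rightarrow> (nat \<Rightarrow> nat) \<Rightarrow> bool" where
  "tree_embedding T P e f \<longleftrightarrow> inj_on f (set_tree P) \<and> f ` set_tree P \<subseteq> set_tree T \<and>
     (\<forall>i p. is_lchild P i p \<longrightarrow> (if e i then is_lchild T (f i) (f p) else f i \<in> Lset T (f p))) \<and>
     (\<forall>i p. is_rchild P i p \<longrightarrow> (if e i then is_rchild T (f i) (f p) else f i \<in> Rset T (f p)))"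

lemma tree_contains_iff_embedding:
  assumes P: "bst P"
  shows "tree_contains T P e \<longleftrightarrow> (\<exists>f. tree_embedding T P e f)"
proof
  assume "tree_contains T P e"
  then obtain f where f: "inj_on f (set_tree P)" "f ` set_tree P \<subseteq> set_tree T"
    "\<forall>i \<in> set_tree P. i \<noteq> value P \<longrightarrow>
       (is_lchild P i (parent P i) \<longrightarrow>
          (if e i then is_lchild T (f i) (f (parent P i)) else f i \<in> Lset T (f (parent P i)))) \<and>
       (is_rchild P i (parent P i) \<longrightarrow>
          (if e i then is_rchild T (f i) (f (parent P i)) else f i \<in> Rset T (f (parent P i))))"
    unfolding tree_contains_def by blast
  have "i \<in> set_tree P \<and> i \<noteq> value P \<and> parent P i = p" if "is_child P i p" for i p
    using Dset_memD[OF is_child_Dset(1)[OF P that]] is_child_neq_root[OF P that] parent_eqI[OF P that]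
    by simp
  then have "tree_embedding T P e f"
    unfolding tree_embedding_def using f unfolding is_child_def by metis
  then show "\<exists>f. tree_embedding T P e f" by blast
next
  assume "\<exists>f. tree_embedding T P e f"
  then show "tree_contains T P e" unfolding tree_contains_def tree_embedding_def by blast
qed

context
  fixes T P :: "nat tree" and e :: "nat \<Rightarrow> bool" and f :: "nat \<Rightarrow> nat" and k :: nat
  assumes T: "bst T" and P: "bst P" and labels: "set_tree P = {1..k}"
    and f: "tree_embedding T P e f"
begin

lemma embedding_mem: "a \<in> set_tree P \<Longrightarrow> f a \<in> set_tree T"
  using f unfolding tree_embedding_def by blast

lemma embedding_inj: "a \<in> set_tree P \<Longrightarrow> b \<in> set_tree P \<Longrightarrow> f a = f b \<Longrightarrow> a = b"
  using f unfolding tree_embedding_def inj_on_def by blast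

lemma embedding_lchild: "is_lchild P i p \<Longrightarrow> if e i then is_lchild T (f i) (f p) else f i \<in> Lset T (f p)"
  using f unfolding tree_embedding_def by blast

lemma embedding_rchild: "is_rchild P i p \<Longrightarrow> if e i then is_rchild T (f i) (f p) else f i \<in> Rset T (f p)"
  using f unfolding tree_embedding_def by blast

lemma embedding_lchild_Lset: "is_lchild P i p \<Longrightarrow> f i \<in> Lset T (f p)"
  using embedding_lchild lchild_Dset(2)[OF T] by (cases "e i") auto

lemma embedding_rchild_Rset: "is_rchild P i p \<Longrightarrow> f i \<in> Rset T (f p)"
  using embedding_rchild rchild_Dset(2)[OF T] by (cases "e i") auto

lemma embedding_Dset:
  assumes a: "a \<in> Dset P i"
  shows "f a \<in> Dset T (f i)"
  using Dset_rtrancl_is_child[OF P a]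
proof (induction rule: converse_rtrancl_induct)
  case base
  show ?case using Dset_memD[OF a] by (simp add: self_in_Dset embedding_mem)
next
  case (step a b)
  then have "is_lchild P a b \<or> is_rchild P a b" by (simp add: is_child_def)
  then have "f a \<in> Dset T (f b)"
    using embedding_lchild_Lset[of a b] embedding_rchild_Rset[of a b]
      Lset_subset_Dset[of T "f b"] Rset_subset_Dset[of T "f b"] by auto
  then show ?case using Dset_trans[OF T step.IH] by simp
qed

lemma embedding_Lset:
  assumes a: "a \<in> Lset P i"
  shows "f a \<in> Lset T (f i)"
proof -
  obtain c where c: "is_lchild P c i" using lchild_exists[OF a] by blast
  then have "f a \<in> Dset T (f c)" using embedding_Dset lchild_Dset(1)[OF P c] a by simp
  then show ?thesis using Lset_trans[OF T embedding_lchild_Lset[OF c]] by simp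
qed

lemma embedding_Rset:
  assumes a: "a \<in> Rset P i"
  shows "f a \<in> Rset T (f i)"
proof -
  obtain c where c: "is_rchild P c i" using rchild_exists[OF a] by blast
  then have "f a \<in> Dset T (f c)" using embedding_Dset rchild_Dset(1)[OF P c] a by simp
  then show ?thesis using Rset_trans[OF T embedding_rchild_Rset[OF c]] by simp
qed

lemma embedding_less: "a \<in> set_tree P \<Longrightarrow> b \<in> set_tree P \<Longrightarrow> a < b \<Longrightarrow> f a < f b"
  using less_cases_Lset_Rset[OF P] embedding_Lset embedding_Rset Lset_less[OF T] Rset_greater[OF T]
  by (meson order.strict_trans)

lemma embedding_less_iff: "a \<in> set_tree P \<Longrightarrow> b \<in> set_tree P \<Longrightarrow> f a < f b \<longleftrightarrow> a < b"
  using embedding_less by (metis less_asym nat_neq_iff)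

lemma embedding_precedes:
  assumes ab: "a \<in> set_tree P" "b \<in> set_tree P" "precedes P a b"
  shows "precedes T (f a) (f b)"
proof -
  have "a \<noteq> b" using ab(3) precedes_irrefl by metis
  then have "b \<in> Dset P a \<or> (\<exists>w. a \<in> Lset P w \<and> b \<in> Rset P w)" using precedes_iff[OF P ab(1,2)] ab(3) by simp
  moreover have "f b \<noteq> f a" using embedding_inj ab(1,2) \<open>a \<noteq> b\<close> by metis
  ultimately show ?thesis
    using precedes_if_Dset[OF T embedding_Dset] precedes_if_Lset_Rset[OF T embedding_Lset embedding_Rset]
    by blast
qed

lemma embedding_precedes_iff:
  "a \<in> set_tree P \<Longrightarrow> b \<in> set_tree P \<Longrightarrow> precedes T (f a) (f b) \<longleftrightarrow> precedes P a b"
  using embedding_precedes precedes_total[of a P b] precedes_asym precedes_irrefl by metis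

lemma embedding_BR_minus_not_in_row:
  assumes j: "j \<in> BR_minus P i" and y: "y \<in> set_tree T" "y \<notin> Dset T (f i)"
  shows "\<not> in_row P f j y"
proof
  assume row: "in_row P f j y"
  have j: "j \<in> Dset P i" "Rset P j \<noteq> {}"
    using j BR_minus_iff[OF P, of j i] BR_subset_Dset[of P i] by auto
  then obtain b where b: "b \<in> Rset P j" by blast
  have Suc_j: "Suc j \<in> Dset P i"
    using Dset_interval_labels[OF P labels j(1) Dset_trans[OF P j(1) Rset_subset_Dset[THEN subsetD, OF b]]]
      Rset_greater[OF P b] by simp
  have "f j < y" "y < f (Suc j)"
    using row Dset_memD[OF j(1)] Dset_memD[OF Suc_j] unfolding in_row_def by auto
  then show False
    using Dset_interval[OF T y(1) embedding_Dset[OF j(1)] embedding_Dset[OF Suc_j]] y(2) by simp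
qed

lemma embedding_edge_not_shaded:
  assumes ij: "e i" "i \<noteq> value P" "i \<in> set_tree P" "j = Min (Dset P i) - 1 \<or> j = Max (Dset P i)"
    and y: "y \<in> set_tree T" and column: "in_column T P f i y" and row: "in_row P f j y"
  shows False
proof -
  have y_fi: "precedes T y (f i)" using column by (simp add: in_column_def)
  obtain p where "is_child P i p" using parent_exists[OF P ij(3,2)] by blast
  then consider "is_lchild P i p" | "is_rchild P i p" unfolding is_child_def by blast
  then show False
  proof cases
    case 1
    have pP: "p \<in> set_tree P" "precedes P p i"
      using lchild_Dset(2)[OF P 1] Lset_memD precedes_if_Dset[OF P] Lset_subset_Dset Lset_less[OF P]
      by (metis less_irrefl subsetD)+
    then have "precedes T (f p) y" using column by (simp add: in_column_def)
    moreover have "is_lchild T (f i) (f p)" using embedding_lchild[OF 1] ij(1) by simp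
    ultimately show False
      using precedes_lchild_iff[OF T _ y] y_fi precedes_asym precedes_irrefl by metis
  next
    case 2
    have pP: "p \<in> set_tree P" "precedes P p i"
      using rchild_Dset(2)[OF P 2] Rset_memD precedes_if_Dset[OF P] Rset_subset_Dset Rset_greater[OF P]
      by (metis less_irrefl subsetD)+
    then have "precedes T (f p) y" using column by (simp add: in_column_def)
    moreover have "is_rchild T (f i) (f p)" using embedding_rchild[OF 2] ij(1) by simp
    ultimately have "y \<in> Lset T (f p)"
      using precedes_rchild_cases[OF T _ y y_fi] precedes_asym precedes_irrefl by metis
    then have "y < f p" by (rule Lset_less[OF T])
    have "p \<le> j \<and> j \<in> set_tree P"
    proof (cases "j = Max (Dset P i)")
      case True
      then have "j \<in> Rset P p" using Min_Max_Dset(2)[OF ij(3)] rchild_Dset(1)[OF P 2] by simp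
      then show ?thesis using Rset_greater[OF P] Rset_memD by fastforce
    qed (use ij(4) rchild_Min_Dset[OF P labels 2] pP in auto)
    moreover have "f p \<le> f j" using embedding_less_iff[OF pP(1), of j] calculation by (cases "p = j") auto
    ultimately show False using row \<open>y < f p\<close> unfolding in_row_def by auto
  qed
qed

lemma embedding_not_shaded:
  assumes ij: "(i, j) \<in> shading P e" and y: "y \<in> set_tree T"
    and column: "in_column T P f i y" and row: "in_row P f j y"
  shows False
proof -
  have "y \<notin> Dset T (f i)"
    using column not_Dset_if_precedes[OF T] by (simp add: in_column_def)
  then show False
    using ij embedding_BR_minus_not_in_row[OF _ y] embedding_edge_not_shaded[OF _ _ _ _ y column row] row
    unfolding shading_def by blast
qed

lemma occurrence_if_embedding: "occurrence T P e f"
  unfolding occurrence_def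
  using embedding_mem embedding_less_iff embedding_precedes_iff embedding_not_shaded by blast

end

lemma tree_contains_iff_occurrence:
  assumes T: "bst T" and P: "bst P" and labels: "set_tree P = {1..k}"
  shows "tree_contains T P e \<longleftrightarrow> (\<exists>g. occurrence T P e g)"
proof
  assume "tree_contains T P e"
  then show "\<exists>g. occurrence T P e g"
    using tree_contains_iff_embedding[OF P] occurrence_if_embedding[OF T P labels] by blast
next
  assume "\<exists>g. occurrence T P e g"
  then obtain g where g: "occurrence T P e g" by blast
  note occ = occurrence_less_iff[OF T P labels g] occurrence_mem[OF T P labels g]
    occurrence_Lset[OF T P labels g] occurrence_rchild_Rset[OF T P labels g]
    occurrence_lchild[OF T P labels g] occurrence_rchild[OF T P labels g]
  have "inj_on g (set_tree P)" using occ(1) by (metis inj_onI less_irrefl nat_neq_iff)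
  then have "tree_embedding T P e g"
    unfolding tree_embedding_def using occ lchild_Dset(2)[OF P] by auto
  then show "tree_contains T P e" using tree_contains_iff_embedding[OF P] by blast
qed

definition preorder_pos :: "'a tree \<Rightarrow> 'a \<Rightarrow> nat" where
  "preorder_pos t v = Suc (list_index (preorder t) v)"

lemma pval_preorder_pos: "v \<in> set_tree t \<Longrightarrow> pval (preorder t) (preorder_pos t v) = v"
  by (simp add: pval_def preorder_pos_def nth_list_index)

lemma preorder_pos_range: "v \<in> set_tree t \<Longrightarrow> preorder_pos t v \<in> {1..size t}"
  using list_index_less_length_iff[of "preorder t" v] by (simp add: preorder_pos_def)

lemma preorder_pos_pval:
  assumes "bst t" "x \<in> {1..size t}"
  shows "pval (preorder t) x \<in> set_tree t" "preorder_pos t (pval (preorder t) x) = x"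
proof -
  have x: "x - 1 < length (preorder t)" using assms(2) by auto
  show "pval (preorder t) x \<in> set_tree t" using nth_mem[OF x] by (simp add: pval_def)
  show "preorder_pos t (pval (preorder t) x) = x"
    using list_index_nth[OF distinct_preorder_if_bst[OF assms(1)] x] assms(2)
    by (simp add: pval_def preorder_pos_def)
qed

lemma pval_preorder_image:
  assumes "bst t"
  shows "pval (preorder t) ` {1..size t} = set_tree t"
proof
  show "pval (preorder t) ` {1..size t} \<subseteq> set_tree t" using preorder_pos_pval[OF assms] by blast
  show "set_tree t \<subseteq> pval (preorder t) ` {1..size t}"
    using preorder_pos_range pval_preorder_pos by (metis image_eqI subsetI)
qed

lemma precedes_iff_preorder_pos: "precedes t a b \<longleftrightarrow> preorder_pos t a < preorder_pos t b"
  by (simp add: precedes_def preorder_pos_def)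

lemma rho_eq_preorder_pos: "bst P \<Longrightarrow> i \<in> set_tree P \<Longrightarrow> rho P i = preorder_pos P i"
  unfolding rho_def
  using preorder_pos_range[of i P] pval_preorder_pos[of i P] preorder_pos_pval[of P]
  by (intro the_equality) auto

lemma size_if_trees: "t \<in> trees n \<Longrightarrow> size t = n"
  using distinct_card[OF distinct_preorder_if_bst[of t]] by (simp add: trees_def)

lemma sorted_list_of_set_image_strict_mono:
  assumes "strict_mono_on {1..k} (g :: nat \<Rightarrow> nat)"
  shows "sorted_list_of_set (g ` {1..k}) = map g [1..<Suc k]"
proof -
  have "sorted_wrt (<) (map g [1..<Suc k])"
    using assms by (auto simp: sorted_wrt_iff_nth_less strict_mono_on_def nth_upt simp del: upt_Suc)
  then have "sorted (map g [1..<Suc k])" "distinct (map g [1..<Suc k])"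
    by (auto simp: strict_sorted_iff)
  moreover have "set (map g [1..<Suc k]) = g ` {1..k}" by auto
  ultimately show ?thesis
    by (metis sorted_list_of_set_sort_remdups distinct_remdups_id sorted_sort_id)
qed

lemma sigma_C_eq_shading: "sigma_C P e = (\<lambda>(i, j). (rho P i - 1, j)) ` shading P e"
  by (auto simp: sigma_C_def shading_def Dset_def image_iff split: if_splits)

lemma shading_bounds:
  assumes P: "bst P" and labels: "set_tree P = {1..k}" and ij: "(i, j) \<in> shading P e"
  shows "i \<in> set_tree P" "j \<le> k"
proof -
  show iP: "i \<in> set_tree P" using ij by (simp add: shading_def)
  have "j \<in> Dset P i \<or> j \<le> Min (Dset P i) \<or> j = Max (Dset P i)"
    using ij BR_minus_iff[OF P, of j i] BR_subset_Dset[of P i] by (auto simp: shading_def)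
  then show "j \<le> k"
    using Min_Max_Dset(1,2)[OF iP] Dset_memD[of _ P i] labels by fastforce
qed

definition ext_index :: "nat \<Rightarrow> nat \<Rightarrow> (nat \<Rightarrow> nat) \<Rightarrow> nat \<Rightarrow> nat" where
  "ext_index k n \<nu> i = (if i = 0 then 0 else if i = k + 1 then n + 1 else \<nu> i)"

definition ext_value :: "nat \<Rightarrow> nat \<Rightarrow> nat list \<Rightarrow> (nat \<Rightarrow> nat) \<Rightarrow> nat \<Rightarrow> nat" where
  "ext_value k n \<pi> \<nu> j = (if j = 0 then 0 else if j = k + 1 then n + 1
     else sorted_list_of_set ((\<lambda>a. pval \<pi> (\<nu> a)) ` {1..k}) ! (j - 1))"

definition empty_box :: "nat list \<Rightarrow> nat \<Rightarrow> (nat \<Rightarrow> nat) \<Rightarrow> nat \<Rightarrow> nat \<Rightarrow> bool" where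
  "empty_box \<pi> k \<nu> i j \<longleftrightarrow> (let n = length \<pi> in
     \<forall>x \<in> {1..n}. ext_index k n \<nu> i < x \<and> x < ext_index k n \<nu> (i + 1) \<longrightarrow>
       \<not> (ext_value k n \<pi> \<nu> j < pval \<pi> x \<and> pval \<pi> x < ext_value k n \<pi> \<nu> (j + 1)))"

definition mesh_occurrence :: "nat list \<Rightarrow> nat list \<Rightarrow> (nat \<times> nat) set \<Rightarrow> (nat \<Rightarrow> nat) \<Rightarrow> bool" where
  "mesh_occurrence \<pi> \<tau> C \<nu> \<longleftrightarrow> (let k = length \<tau> in
     strict_mono_on {1..k} \<nu> \<and> \<nu> ` {1..k} \<subseteq> {1..length \<pi>} \<and>
     (\<forall>a \<in> {1..k}. \<forall>b \<in> {1..k}. pval \<pi> (\<nu> a) < pval \<pi> (\<nu> b) \<longleftrightarrow> pval \<tau> a < pval \<tau> b) \<and>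
     (\<forall>(i, j) \<in> C. empty_box \<pi> k \<nu> i j))"

lemma mesh_contains_iff_mesh_occurrence: "mesh_contains \<pi> \<tau> C \<longleftrightarrow> (\<exists>\<nu>. mesh_occurrence \<pi> \<tau> C \<nu>)"
  unfolding mesh_contains_def mesh_occurrence_def empty_box_def ext_index_def ext_value_def Let_def
  by fast

text \<open>The same map from P to T, given by positions \<nu> in the preorder word of T and by vertices g.\<close>
context
  fixes T P :: "nat tree" and n k :: nat and \<nu> g :: "nat \<Rightarrow> nat"
  assumes T: "T \<in> trees n" and P: "P \<in> trees k"
    and corr: "\<And>l. l \<in> set_tree P \<Longrightarrow> g l \<in> set_tree T \<and> preorder_pos T (g l) = \<nu> (preorder_pos P l)"
begin

lemma corr_trees:
  "bst T" "set_tree T = {1..n}" "size T = n" "bst P" "set_tree P = {1..k}" "size P = k"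
  using T P size_if_trees by (auto simp: trees_def)

lemma corr_pval_pos:
  assumes "a \<in> {1..k}"
  shows "pval (preorder P) a \<in> set_tree P" "preorder_pos P (pval (preorder P) a) = a"
  using preorder_pos_pval[OF corr_trees(4)] assms corr_trees(6) by auto

lemma corr_pval:
  assumes "a \<in> {1..k}"
  shows "pval (preorder T) (\<nu> a) = g (pval (preorder P) a)"
  using corr[OF corr_pval_pos(1)[OF assms]] pval_preorder_pos[of _ T] corr_pval_pos(2)[OF assms] by metis

lemma corr_pval_image: "pval (preorder P) ` {1..k} = set_tree P"
  using pval_preorder_image[OF corr_trees(4)] corr_trees(6) by simp

lemma corr_range: "\<nu> ` {1..k} \<subseteq> {1..n}"
  using corr corr_pval_pos preorder_pos_range corr_trees(3) by fastforce

lemma corr_strict_mono_iff: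
  "strict_mono_on {1..k} \<nu> \<longleftrightarrow>
     (\<forall>a \<in> set_tree P. \<forall>b \<in> set_tree P. precedes T (g a) (g b) \<longleftrightarrow> precedes P a b)"
proof
  assume sm: "strict_mono_on {1..k} \<nu>"
  show "\<forall>a \<in> set_tree P. \<forall>b \<in> set_tree P. precedes T (g a) (g b) \<longleftrightarrow> precedes P a b"
    using strict_mono_on_less[OF sm] preorder_pos_range[of _ P] corr corr_trees(6)
    by (simp add: precedes_iff_preorder_pos)
next
  assume pre: "\<forall>a \<in> set_tree P. \<forall>b \<in> set_tree P. precedes T (g a) (g b) \<longleftrightarrow> precedes P a b"
  show "strict_mono_on {1..k} \<nu>"
  proof (rule strict_mono_onI)
    fix a b assume "a \<in> {1..k}" "b \<in> {1..k}" "a < b"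
    then show "\<nu> a < \<nu> b"
      using pre corr_pval_pos corr by (metis precedes_iff_preorder_pos)
  qed
qed

lemma corr_order_iff:
  "(\<forall>a \<in> {1..k}. \<forall>b \<in> {1..k}.
      pval (preorder T) (\<nu> a) < pval (preorder T) (\<nu> b) \<longleftrightarrow> pval (preorder P) a < pval (preorder P) b) \<longleftrightarrow>
   (\<forall>a \<in> set_tree P. \<forall>b \<in> set_tree P. g a < g b \<longleftrightarrow> a < b)"
proof -
  have "(\<forall>a \<in> {1..k}. \<forall>b \<in> {1..k}.
      pval (preorder T) (\<nu> a) < pval (preorder T) (\<nu> b) \<longleftrightarrow> pval (preorder P) a < pval (preorder P) b) \<longleftrightarrow>
    (\<forall>a \<in> pval (preorder P) ` {1..k}. \<forall>b \<in> pval (preorder P) ` {1..k}. g a < g b \<longleftrightarrow> a < b)"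
    by (simp add: corr_pval)
  then show ?thesis unfolding corr_pval_image .
qed

lemma corr_ext_value:
  assumes mono: "\<forall>a \<in> set_tree P. \<forall>b \<in> set_tree P. g a < g b \<longleftrightarrow> a < b" and j: "1 \<le> j" "j \<le> k"
  shows "ext_value k n (preorder T) \<nu> j = g j"
proof -
  have "(\<lambda>a. pval (preorder T) (\<nu> a)) ` {1..k} = g ` pval (preorder P) ` {1..k}"
    using corr_pval by (auto simp: image_image)
  also have "pval (preorder P) ` {1..k} = {1..k}" using corr_pval_image corr_trees(5) by simp
  finally have "ext_value k n (preorder T) \<nu> j = sorted_list_of_set (g ` {1..k}) ! (j - 1)"
    using j by (simp add: ext_value_def)
  also have "\<dots> = g j"
    using sorted_list_of_set_image_strict_mono[of k g] mono corr_trees(5) j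
    by (simp add: strict_mono_on_def nth_upt del: upt_Suc)
  finally show ?thesis .
qed

lemma corr_in_column_iff:
  assumes sm: "strict_mono_on {1..k} \<nu>" and i: "i \<in> set_tree P" and y: "y \<in> set_tree T"
  shows "in_column T P g i y \<longleftrightarrow>
    ext_index k n \<nu> (preorder_pos P i - 1) < preorder_pos T y \<and>
    preorder_pos T y < ext_index k n \<nu> (preorder_pos P i)"
proof -
  let ?c = "preorder_pos P i - 1"
  have c: "?c + 1 = preorder_pos P i" "?c < k" using preorder_pos_range[OF i] corr_trees(6) by auto
  have right: "precedes T y (g i) \<longleftrightarrow> preorder_pos T y < ext_index k n \<nu> (preorder_pos P i)"
    using corr[OF i] c by (simp add: precedes_iff_preorder_pos ext_index_def)
  have left: "(\<forall>a \<in> set_tree P. precedes P a i \<longrightarrow> precedes T (g a) y) \<longleftrightarrow>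
      ext_index k n \<nu> ?c < preorder_pos T y"
  proof (cases "?c = 0")
    case True
    then show ?thesis using preorder_pos_range[of _ P] precedes_iff_preorder_pos[of P _ i]
      by (fastforce simp: ext_index_def preorder_pos_def)
  next
    case False
    then have c_range: "?c \<in> {1..k}" using c by simp
    let ?a = "pval (preorder P) ?c"
    have a: "?a \<in> set_tree P" "preorder_pos P ?a = ?c" using corr_pval_pos[OF c_range] by auto
    have "precedes T (g b) y"
      if "ext_index k n \<nu> ?c < preorder_pos T y" "b \<in> set_tree P" "precedes P b i" for b
    proof -
      have "preorder_pos P b \<le> ?c" "preorder_pos P b \<in> {1..k}"
        using that(2,3) preorder_pos_range[of b P] corr_trees(6)
        by (auto simp: precedes_iff_preorder_pos)
      then have "\<nu> (preorder_pos P b) \<le> \<nu> ?c"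
        using strict_mono_on_leD[OF sm] c_range by blast
      then show ?thesis
        using that(1) corr[OF that(2)] False c by (simp add: precedes_iff_preorder_pos ext_index_def)
    qed
    moreover have "precedes P ?a i" using a c by (simp add: precedes_iff_preorder_pos)
    ultimately show ?thesis
      using corr[OF a(1)] a False c by (auto simp: precedes_iff_preorder_pos ext_index_def)
  qed
  show ?thesis unfolding in_column_def using left right by blast
qed

lemma corr_in_row_iff:
  assumes mono: "\<forall>a \<in> set_tree P. \<forall>b \<in> set_tree P. g a < g b \<longleftrightarrow> a < b"
    and j: "j \<le> k" and y: "y \<in> set_tree T"
  shows "in_row P g j y \<longleftrightarrow>
    ext_value k n (preorder T) \<nu> j < y \<and> y < ext_value k n (preorder T) \<nu> (j + 1)"
  using j y corr_ext_value[OF mono, of j] corr_ext_value[OF mono, of "j + 1"] corr_trees(2,5)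
  by (auto simp: in_row_def ext_value_def)

lemma corr_empty_box_iff:
  assumes sm: "strict_mono_on {1..k} \<nu>" and mono: "\<forall>a \<in> set_tree P. \<forall>b \<in> set_tree P. g a < g b \<longleftrightarrow> a < b"
    and ij: "(i, j) \<in> shading P e"
  shows "empty_box (preorder T) k \<nu> (rho P i - 1) j \<longleftrightarrow>
    (\<forall>y \<in> set_tree T. in_column T P g i y \<longrightarrow> \<not> in_row P g j y)"
proof -
  note ij' = shading_bounds[OF corr_trees(4,5) ij]
  have rho: "rho P i - 1 = preorder_pos P i - 1" "preorder_pos P i - 1 + 1 = preorder_pos P i"
    using rho_eq_preorder_pos[OF corr_trees(4) ij'(1)] preorder_pos_range[OF ij'(1)] by auto
  note column = corr_in_column_iff[OF sm ij'(1)] and row = corr_in_row_iff[OF mono ij'(2)]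
  have pos: "preorder_pos T y \<in> {1..n}" "pval (preorder T) (preorder_pos T y) = y"
    if "y \<in> set_tree T" for y
    using preorder_pos_range[OF that] pval_preorder_pos[OF that] corr_trees(3) by auto
  have pval: "pval (preorder T) x \<in> set_tree T" "preorder_pos T (pval (preorder T) x) = x"
    if "x \<in> {1..n}" for x
    using preorder_pos_pval[OF corr_trees(1)] that corr_trees(3) by auto
  have len: "length (preorder T) = n" using corr_trees(3) by simp
  show ?thesis
    unfolding empty_box_def Let_def len rho
  proof (intro iffI ballI impI)
    fix y assume box: "\<forall>x \<in> {1..n}. ext_index k n \<nu> (preorder_pos P i - 1) < x \<and>
        x < ext_index k n \<nu> (preorder_pos P i) \<longrightarrow> \<not> (ext_value k n (preorder T) \<nu> j < pval (preorder T) x \<and>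
          pval (preorder T) x < ext_value k n (preorder T) \<nu> (j + 1))"
      and y: "y \<in> set_tree T" "in_column T P g i y"
    from bspec[OF box pos(1)[OF y(1)]] show "\<not> in_row P g j y"
      using column[OF y(1)] row[OF y(1)] y(2) pos(2)[OF y(1)] by simp
  next
    fix x assume shade: "\<forall>y \<in> set_tree T. in_column T P g i y \<longrightarrow> \<not> in_row P g j y"
      and x: "x \<in> {1..n}" "ext_index k n \<nu> (preorder_pos P i - 1) < x \<and> x < ext_index k n \<nu> (preorder_pos P i)"
    show "\<not> (ext_value k n (preorder T) \<nu> j < pval (preorder T) x \<and>
        pval (preorder T) x < ext_value k n (preorder T) \<nu> (j + 1))"
      using shade column[OF pval(1)[OF x(1)]] row[OF pval(1)[OF x(1)]] pval(2)[OF x(1)] x(2) pval(1)[OF x(1)]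
      by simp
  qed
qed

lemma corr_mesh_occurrence_iff:
  "mesh_occurrence (preorder T) (preorder P) (sigma_C P e) \<nu> \<longleftrightarrow> occurrence T P e g"
proof -
  have boxes: "(\<forall>(c, j) \<in> sigma_C P e. empty_box (preorder T) k \<nu> c j) \<longleftrightarrow>
      (\<forall>(i, j) \<in> shading P e. \<forall>y \<in> set_tree T. in_column T P g i y \<longrightarrow> \<not> in_row P g j y)"
    if "strict_mono_on {1..k} \<nu>" "\<forall>a \<in> set_tree P. \<forall>b \<in> set_tree P. g a < g b \<longleftrightarrow> a < b"
    unfolding sigma_C_eq_shading using corr_empty_box_iff[OF that] by fast
  have "\<forall>a \<in> set_tree P. g a \<in> set_tree T" using corr by blast
  then show ?thesis
    unfolding mesh_occurrence_def occurrence_def Let_def length_preorder corr_trees(3,6)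
    using corr_range corr_strict_mono_iff corr_order_iff boxes by argo
qed

end

lemma mesh_contains_iff_occurrence:
  assumes T: "T \<in> trees n" and P: "P \<in> trees k"
  shows "mesh_contains (preorder T) (preorder P) (sigma_C P e) \<longleftrightarrow> (\<exists>g. occurrence T P e g)"
proof -
  have bst: "bst T" "bst P" and size: "size T = n" "size P = k"
    using T P size_if_trees by (auto simp: trees_def)
  have "\<exists>g. occurrence T P e g" if "mesh_occurrence (preorder T) (preorder P) (sigma_C P e) \<nu>" for \<nu>
  proof -
    define g where "g l = pval (preorder T) (\<nu> (preorder_pos P l))" for l
    have "\<nu> ` {1..k} \<subseteq> {1..n}" using that size by (simp add: mesh_occurrence_def)
    then have "\<nu> (preorder_pos P l) \<in> {1..size T}" if "l \<in> set_tree P" for l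
      using preorder_pos_range[OF that] size by blast
    then have "g l \<in> set_tree T \<and> preorder_pos T (g l) = \<nu> (preorder_pos P l)" if "l \<in> set_tree P" for l
      using preorder_pos_pval[OF bst(1)] that unfolding g_def by blast
    then show ?thesis using corr_mesh_occurrence_iff[OF T P] that by blast
  qed
  moreover have "\<exists>\<nu>. mesh_occurrence (preorder T) (preorder P) (sigma_C P e) \<nu>" if "occurrence T P e g" for g
  proof -
    define \<nu> where "\<nu> a = preorder_pos T (g (pval (preorder P) a))" for a
    have "g l \<in> set_tree T \<and> preorder_pos T (g l) = \<nu> (preorder_pos P l)" if "l \<in> set_tree P" for l
      using that \<open>occurrence T P e g\<close> pval_preorder_pos[OF that] unfolding \<nu>_def occurrence_def by auto
    then show ?thesis using corr_mesh_occurrence_iff[OF T P] that by blast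
  qed
  ultimately show ?thesis unfolding mesh_contains_iff_mesh_occurrence by blast
qed

definition avoids_231 :: "nat list \<Rightarrow> bool" where
  "avoids_231 xs \<longleftrightarrow> (\<forall>i j l. i < j \<longrightarrow> j < l \<longrightarrow> l < length xs \<longrightarrow> \<not> (xs ! l < xs ! i \<and> xs ! i < xs ! j))"

lemma classical_contains_231_iff: "classical_contains xs [2, 3, 1] \<longleftrightarrow> \<not> avoids_231 xs"
proof -
  have "classical_contains xs [2, 3, 1] \<longleftrightarrow> (\<exists>\<nu>. strict_mono_on {1..3} \<nu> \<and> \<nu> ` {1..3} \<subseteq> {1..length xs} \<and>
    (\<forall>a \<in> {1..3}. \<forall>b \<in> {1..3}. pval xs (\<nu> a) < pval xs (\<nu> b) \<longleftrightarrow> pval [2, 3, 1] a < pval [2, 3, 1] b))"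
    unfolding classical_contains_def mesh_contains_iff_mesh_occurrence mesh_occurrence_def
    by (simp add: numeral_3_eq_3)
  also have "\<dots> \<longleftrightarrow> \<not> avoids_231 xs"
  proof
    assume "\<exists>\<nu>. strict_mono_on {1..3} \<nu> \<and> \<nu> ` {1..3} \<subseteq> {1..length xs} \<and>
      (\<forall>a \<in> {1..3}. \<forall>b \<in> {1..3}. pval xs (\<nu> a) < pval xs (\<nu> b) \<longleftrightarrow> pval [2, 3, 1] a < pval [2, 3, 1] b)"
    then obtain \<nu> where sm: "strict_mono_on {1..3} \<nu>" and rng: "\<nu> ` {1..3} \<subseteq> {1..length xs}"
      and ord: "\<forall>a \<in> {1..3}. \<forall>b \<in> {1..3}. pval xs (\<nu> a) < pval xs (\<nu> b) \<longleftrightarrow> pval [2, 3, 1] a < pval [2, 3, 1] b"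
      by blast
    have "\<nu> 1 < \<nu> 2" "\<nu> 2 < \<nu> 3" using sm unfolding strict_mono_on_def by auto
    moreover have "1 \<le> \<nu> 1" "\<nu> 3 \<le> length xs" using rng by (auto simp: image_subset_iff)
    ultimately have "\<nu> 1 - 1 < \<nu> 2 - 1" "\<nu> 2 - 1 < \<nu> 3 - 1" "\<nu> 3 - 1 < length xs" by auto
    moreover have "xs ! (\<nu> 3 - 1) < xs ! (\<nu> 1 - 1)" "xs ! (\<nu> 1 - 1) < xs ! (\<nu> 2 - 1)"
      using ord by (auto simp: pval_def)
    ultimately show "\<not> avoids_231 xs" unfolding avoids_231_def by blast
  next
    assume "\<not> avoids_231 xs"
    then obtain i j l where h: "i < j" "j < l" "l < length xs" "xs ! l < xs ! i" "xs ! i < xs ! j"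
      unfolding avoids_231_def by blast
    define \<nu> :: "nat \<Rightarrow> nat" where "\<nu> a = (if a = 1 then Suc i else if a = 2 then Suc j else Suc l)" for a
    have three: "{1..3::nat} = {1, 2, 3}" by auto
    show "\<exists>\<nu>. strict_mono_on {1..3} \<nu> \<and> \<nu> ` {1..3} \<subseteq> {1..length xs} \<and>
      (\<forall>a \<in> {1..3}. \<forall>b \<in> {1..3}. pval xs (\<nu> a) < pval xs (\<nu> b) \<longleftrightarrow> pval [2, 3, 1] a < pval [2, 3, 1] b)"
      using h by (intro exI[of _ \<nu>]) (auto simp: three \<nu>_def strict_mono_on_def pval_def)
  qed
  finally show ?thesis .
qed

lemma avoids_231_preorder: "bst t \<Longrightarrow> avoids_231 (preorder t)"
  unfolding avoids_231_def
proof (intro allI impI notI)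
  fix i j l assume t: "bst t" and h: "i < j" "j < l" "l < length (preorder t)"
    and v: "preorder t ! l < preorder t ! i \<and> preorder t ! i < preorder t ! j"
  have "list_index (preorder t) (preorder t ! m) = m" if "m \<le> l" for m
    using list_index_nth[OF distinct_preorder_if_bst[OF t]] that h(3) by simp
  then have "precedes t (preorder t ! i) (preorder t ! j)" "precedes t (preorder t ! j) (preorder t ! l)"
    using h by (simp_all add: precedes_def)
  then show False using no_231_in_preorder[OF t _ _ _] nth_mem[OF h(3)] v by fastforce
qed

lemma filter_append_split:
  assumes "\<forall>x \<in> set xs. x < (a::nat)" "\<forall>x \<in> set ys. a < x"
  shows "filter (\<lambda>y. y < a) (xs @ ys) = xs" "filter (\<lambda>y. \<not> y < a) (xs @ ys) = ys"
proof -
  have "filter (\<lambda>y. y < a) xs = xs" using assms(1) by (simp add: filter_id_conv)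
  moreover have "filter (\<lambda>y. y < a) ys = []" using assms(2) by (auto simp: filter_empty_conv)
  ultimately show "filter (\<lambda>y. y < a) (xs @ ys) = xs" by simp
  have "filter (\<lambda>y. \<not> y < a) ys = ys" using assms(2) by (auto simp: filter_id_conv)
  moreover have "filter (\<lambda>y. \<not> y < a) xs = []" using assms(1) by (auto simp: filter_empty_conv)
  ultimately show "filter (\<lambda>y. \<not> y < a) (xs @ ys) = ys" by simp
qed

lemma preorder_inj_bst: "bst t1 \<Longrightarrow> bst t2 \<Longrightarrow> preorder t1 = preorder (t2 :: nat tree) \<Longrightarrow> t1 = t2"
proof (induction t1 arbitrary: t2)
  case Leaf then show ?case by simp
next
  case (Node l a r)
  obtain l' r' where t2: "t2 = Node l' a r'" and e: "preorder l' @ preorder r' = preorder l @ preorder r"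
    using Node.prems(3) preorder_eq_Cons_iff[of t2 a "preorder l @ preorder r"] by auto
  have b1: "bst l" "bst r" "\<forall>x \<in> set (preorder l). x < a" "\<forall>x \<in> set (preorder r). a < x"
    using Node.prems(1) by auto
  have b2: "bst l'" "bst r'" "\<forall>x \<in> set (preorder l'). x < a" "\<forall>x \<in> set (preorder r'). a < x"
    using Node.prems(2) t2 by auto
  note f1 = filter_append_split[OF b1(3,4)] and f2 = filter_append_split[OF b2(3,4)]
  have "preorder l = preorder l'" using f1(1) f2(1) e by metis
  moreover have "preorder r = preorder r'" using f1(2) f2(2) e by metis
  ultimately show ?case using Node.IH(1)[OF b1(1) b2(1)] Node.IH(2)[OF b1(2) b2(2)] t2 by simp
qed

lemma avoids_231_append: "avoids_231 (A @ B) \<Longrightarrow> avoids_231 A \<and> avoids_231 B"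
proof
  assume H: "avoids_231 (A @ B)"
  show "avoids_231 A"
    unfolding avoids_231_def
  proof (intro allI impI)
    fix i j l assume h: "i < j" "j < l" "l < length A"
    have "\<not> ((A @ B) ! l < (A @ B) ! i \<and> (A @ B) ! i < (A @ B) ! j)"
      using H[unfolded avoids_231_def, rule_format, of i j l] h by simp
    then show "\<not> (A ! l < A ! i \<and> A ! i < A ! j)" using h by (simp add: nth_append)
  qed
  show "avoids_231 B"
    unfolding avoids_231_def
  proof (intro allI impI)
    fix i j l assume h: "i < j" "j < l" "l < length B"
    have "\<not> ((A @ B) ! (length A + l) < (A @ B) ! (length A + i) \<and>
        (A @ B) ! (length A + i) < (A @ B) ! (length A + j))"
      using H[unfolded avoids_231_def, rule_format, of "length A + i" "length A + j" "length A + l"] h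
      by simp
    then show "\<not> (B ! l < B ! i \<and> B ! i < B ! j)" by (simp add: nth_append)
  qed
qed

lemma eq_filter_less_append_filter_not_less:
  "(\<forall>i j. i < j \<longrightarrow> j < length ys \<longrightarrow> \<not> (x < ys ! i \<and> ys ! j < (x::nat))) \<Longrightarrow> x \<notin> set ys \<Longrightarrow>
   ys = filter (\<lambda>y. y < x) ys @ filter (\<lambda>y. \<not> y < x) ys"
proof (induction ys)
  case Nil then show ?case by simp
next
  case (Cons y zs)
  have Czs: "\<forall>i j. i < j \<longrightarrow> j < length zs \<longrightarrow> \<not> (x < zs ! i \<and> zs ! j < x)"
  proof (intro allI impI)
    fix i j assume "i < j" "j < length zs"
    then show "\<not> (x < zs ! i \<and> zs ! j < x)" using Cons.prems(1)[rule_format, of "Suc i" "Suc j"] by simp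
  qed
  show ?case
  proof (cases "y < x")
    case True
    then show ?thesis using Cons.IH[OF Czs] Cons.prems(2) by simp
  next
    case False
    then have yx: "x < y" using Cons.prems(2) by auto
    have "\<not> z < x" if zin: "z \<in> set zs" for z
    proof
      assume zx: "z < x"
      obtain j where j: "j < length zs" "zs ! j = z" using in_set_conv_nth[THEN iffD1, OF zin] by blast
      show False using Cons.prems(1)[rule_format, of 0 "Suc j"] j yx zx by simp
    qed
    then have "filter (\<lambda>y. y < x) zs = []" "filter (\<lambda>y. \<not> y < x) zs = zs"
      by (auto simp: filter_empty_conv filter_id_conv)
    then show ?thesis using False by simp
  qed
qed

lemma avoids_231_Cons_split:
  assumes x: "x \<notin> set ys" and av: "avoids_231 (x # ys)"
  shows "ys = filter (\<lambda>y. y < x) ys @ filter (\<lambda>y. \<not> y < x) ys"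
proof -
  have "\<forall>i j. i < j \<longrightarrow> j < length ys \<longrightarrow> \<not> (x < ys ! i \<and> ys ! j < x)"
  proof (intro allI impI)
    fix i j assume "i < j" "j < length ys"
    then show "\<not> (x < ys ! i \<and> ys ! j < x)"
      using av[unfolded avoids_231_def, rule_format, of 0 "Suc i" "Suc j"] by auto
  qed
  then show ?thesis using eq_filter_less_append_filter_not_less x by blast
qed

lemma bst_with_preorder_exists: "distinct xs \<Longrightarrow> avoids_231 xs \<Longrightarrow> \<exists>t. bst t \<and> preorder t = xs"
proof (induction "length xs" arbitrary: xs rule: less_induct)
  case less
  show ?case
  proof (cases xs)
    case Nil
    then show ?thesis by (intro exI[of _ Leaf]) simp
  next
    case (Cons x ys)
    define A where "A = filter (\<lambda>y. y < x) ys"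
    define B where "B = filter (\<lambda>y. \<not> y < x) ys"
    have xn: "x \<notin> set ys" and dys: "distinct ys" using less.prems(1) Cons by auto
    have ys: "ys = A @ B" unfolding A_def B_def using avoids_231_Cons_split[OF xn] less.prems(2) Cons by simp
    have "avoids_231 ys" using avoids_231_append[of "[x]" ys] less.prems(2) Cons by simp
    then have avAB: "avoids_231 A" "avoids_231 B" using avoids_231_append ys by metis+
    have dAB: "distinct A" "distinct B" unfolding A_def B_def using dys by auto
    have lAB: "length A < length xs" "length B < length xs" using ys Cons by auto
    obtain tA where tA: "bst tA" "preorder tA = A" using less.hyps[OF lAB(1) dAB(1) avAB(1)] by blast
    obtain tB where tB: "bst tB" "preorder tB = B" using less.hyps[OF lAB(2) dAB(2) avAB(2)] by blast
    have "\<forall>z \<in> set_tree tA. z < x" "\<forall>z \<in> set_tree tB. x < z"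
      using tA(2) tB(2) xn unfolding A_def B_def set_preorder[symmetric]
      by auto (metis linorder_neqE_nat)
    then have "bst (Node tA x tB)" using tA(1) tB(1) by simp
    moreover have "preorder (Node tA x tB) = xs" using tA(2) tB(2) ys Cons by simp
    ultimately show ?thesis by blast
  qed
qed

lemma bij_betw_preorder_trees: "bij_betw preorder (trees n) {xs \<in> perms n. avoids_231 xs}"
proof (rule bij_betw_imageI)
  show "inj_on preorder (trees n)" using preorder_inj_bst by (auto simp: inj_on_def trees_def)
  have "preorder t \<in> perms n \<and> avoids_231 (preorder t)" if "t \<in> trees n" for t
    using that size_if_trees[OF that] distinct_preorder_if_bst avoids_231_preorder
    by (auto simp: trees_def perms_def)
  moreover have "xs \<in> preorder ` trees n" if "xs \<in> perms n" "avoids_231 xs" for xs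
    using that bst_with_preorder_exists[of xs] by (fastforce simp: trees_def perms_def)
  ultimately show "preorder ` trees n = {xs \<in> perms n. avoids_231 xs}" by blast
qed

theorem theorem2:
  fixes P :: "nat tree" and e :: "nat \<Rightarrow> bool" and k n :: nat
  assumes "P \<in> trees k"
  shows "bij_betw preorder (trees_avoiding n P e) (perms_avoiding n P e)"
proof -
  have P: "bst P" "set_tree P = {1..k}" using assms by (simp_all add: trees_def)
  have "\<not> mesh_contains (preorder T) (preorder P) (sigma_C P e) \<longleftrightarrow> \<not> tree_contains T P e"
    if "T \<in> trees n" for T
    using mesh_contains_iff_occurrence[OF that assms] tree_contains_iff_occurrence[OF _ P] that
    by (simp add: trees_def)
  then have "bij_betw preorder {T \<in> trees n. \<not> tree_contains T P e}
      {xs \<in> {xs \<in> perms n. avoids_231 xs}. \<not> mesh_contains xs (preorder P) (sigma_C P e)}"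
    by (rule bij_betw_Collect[OF bij_betw_preorder_trees])
  moreover have "{xs \<in> {xs \<in> perms n. avoids_231 xs}. \<not> mesh_contains xs (preorder P) (sigma_C P e)} =
      perms_avoiding n P e"
    unfolding perms_avoiding_def classical_contains_231_iff by auto
  ultimately show ?thesis by (simp add: trees_avoiding_def)
qed

end
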